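(* Let $\mathcal{W}$ be an AVC. For any $\delta>0$, $\xi>0$ and $P\in\mathcal{P}(\mathcal{X})$ with $\min_xP(x)>0$, there is $c$ sufficiently large such that for every $M$ the set $(T_P^c)^M$ is a list-decodable code of blocklength $Mc$ with $N_M$ messages and list size $L(\mathbf{y}_1^{Mc},\mathcal{V}_1^M)$ for side information $\mathcal{V}_1^M=(\mathcal{V}_1,\dots,\mathcal{V}_M)\in\mathcal{V}_c^M$, where $$N_M\ge\exp\big(Mc(H(X)-\xi)\big),\qquad L(\mathbf{y}_1^{Mc},\mathcal{V}_1^M)\le\exp\Big(c\Big(\sum_{m=1}^M\max_{V\in\mathcal{V}_m(\mathbf{y}^{(m)},\delta)}H(X_m|Y_m)+M\xi\Big)\Big),$$ and maximal probability of list-decoding error $\varepsilon_L\le M\exp(-c\,E_2(\xi))$ with $E_2(\xi)>0$. Here $H(X)$ is computed under $P$, and for $V\in\mathcal{V}_m(\mathbf{y}^{(m)},\delta)$ the conditional entropy is computed under $P(x)V(y|x)$.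
   Context: AVC: $\mathcal{W}=\{W(y|x,s):s\in\mathcal{S}\}$, finite alphabets, product channel law; under nosy noise states may depend on the transmitted codeword. $T_P^c\subset\mathcal{X}^c$ is the set of length-$c$ sequences of type $P$; $(T_P^c)^M$ is the set of concatenations of $M$ such chunks. The $m$-th chunk of $\mathbf{y}$ is $\mathbf{y}^{(m)}=(y_{(m-1)c+1},\dots,y_{mc})$. For chunk $m$, the average channel is $V_m(y|x)=\frac{1}{N(x|\mathbf{x}^{(m)})}\sum_{t=(m-1)c+1}^{mc}W(y|x_t,s_t)\mathbf{1}(x_t=x)$, and the decoder receives a set $\mathcal{V}_m\ni V_m$ of channels from a finite family $\mathcal{V}_c$ with $|\mathcal{V}_c|\le c^v$, $v<\infty$ fixed. $\mathcal{V}_m(\mathbf{y}^{(m)},\delta)=\{V\in\mathcal{V}_m: d_{TV}(T_{\mathbf{y}^{(m)}},\sum_xP(x)V(\cdot|x))<\delta\}$ with $T_{\mathbf{y}^{(m)}}$ the type of $\mathbf{y}^{(m)}$ and $d_{TV}$ total variation distance. A list-decodable code outputs a list of messages; its error is the maximum over messages and jammer strategies of the probability that the transmitted message is not in the list. *)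

theory Defs
  imports Complex_Main
begin

(* Channels: V a b = V(b|a).  AVC: W s a b = W(b|a,s). Natural logarithms (rates in nats). *)

definition stochastic :: "('a::finite \<Rightarrow> 'b::finite \<Rightarrow> real) \<Rightarrow> bool" where
  "stochastic V \<longleftrightarrow> (\<forall>a. (\<forall>b. V a b \<ge> 0) \<and> (\<Sum>b\<in>UNIV. V a b) = 1)"

definition is_AVC :: "('s::finite \<Rightarrow> 'a::finite \<Rightarrow> 'b::finite \<Rightarrow> real) \<Rightarrow> bool" where
  "is_AVC W \<longleftrightarrow> (\<forall>s. stochastic (W s))"

definition is_pd :: "('a::finite \<Rightarrow> real) \<Rightarrow> bool" where
  "is_pd P \<longleftrightarrow> (\<forall>a. P a \<ge> 0) \<and> (\<Sum>a\<in>UNIV. P a) = 1"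

definition entropy :: "('a::finite \<Rightarrow> real) \<Rightarrow> real" where
  "entropy P = - (\<Sum>a\<in>UNIV. if P a = 0 then 0 else P a * ln (P a))"

definition out_dist :: "('a::finite \<Rightarrow> real) \<Rightarrow> ('a \<Rightarrow> 'b::finite \<Rightarrow> real) \<Rightarrow> 'b \<Rightarrow> real" where
  "out_dist P V b = (\<Sum>a\<in>UNIV. P a * V a b)"

definition cond_entropy :: "('a::finite \<Rightarrow> real) \<Rightarrow> ('a \<Rightarrow> 'b::finite \<Rightarrow> real) \<Rightarrow> real" where
  "cond_entropy P V = - (\<Sum>a\<in>UNIV. \<Sum>b\<in>UNIV.
      if P a * V a b = 0 then 0 else P a * V a b * ln (P a * V a b / out_dist P V b))"

definition d_TV :: "('b::finite \<Rightarrow> real) \<Rightarrow> ('b \<Rightarrow> real) \<Rightarrow> real" where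
  "d_TV p q = (\<Sum>b\<in>UNIV. \<bar>p b - q b\<bar>) / 2"

definition seq_type :: "'b list \<Rightarrow> 'b \<Rightarrow> real" where
  "seq_type ys b = real (count_list ys b) / real (length ys)"

definition typeclass_set :: "('a \<Rightarrow> real) \<Rightarrow> nat \<Rightarrow> 'a list set" where
  "typeclass_set P c = {xs. length xs = c \<and> (\<forall>a. real (count_list xs a) = real c * P a)}"

definition chunk :: "nat \<Rightarrow> nat \<Rightarrow> 'a list \<Rightarrow> 'a list" where
  "chunk c m xs = take c (drop (m * c) xs)"

definition concat_type_class :: "('a \<Rightarrow> real) \<Rightarrow> nat \<Rightarrow> nat \<Rightarrow> 'a list set" where
  "concat_type_class P c M =
     {xs. length xs = M * c \<and> (\<forall>m<M. chunk c m xs \<in> typeclass_set P c)}"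

definition avg_channel :: "('s \<Rightarrow> 'a \<Rightarrow> 'b \<Rightarrow> real) \<Rightarrow> 'a list \<Rightarrow> 's list \<Rightarrow> 'a \<Rightarrow> 'b \<Rightarrow> real" where
  "avg_channel W xs ss a b =
     (\<Sum>t<length xs. if xs ! t = a then W (ss ! t) a b else 0) / real (count_list xs a)"

definition near_channels ::
  "('a::finite \<Rightarrow> real) \<Rightarrow> ('a \<Rightarrow> 'b::finite \<Rightarrow> real) set \<Rightarrow> 'b list \<Rightarrow> real \<Rightarrow> ('a \<Rightarrow> 'b \<Rightarrow> real) set" where
  "near_channels P Vs ys \<delta> = {V \<in> Vs. d_TV (seq_type ys) (out_dist P V) < \<delta>}"

definition out_prob ::
  "('s \<Rightarrow> 'a \<Rightarrow> 'b::finite \<Rightarrow> real) \<Rightarrow> 'a list \<Rightarrow> 's list \<Rightarrow> ('b list \<Rightarrow> bool) \<Rightarrow> real" where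
  "out_prob W xs ss A =
     (\<Sum>ys\<in>{ys. length ys = length xs}.
        if A ys then (\<Prod>t<length xs. W (ss ! t) (xs ! t) (ys ! t)) else 0)"

end

theory Submission
  imports Defs "HOL-Combinatorics.Multiset_Permutations" "HOL-Analysis.Analysis"
    "HOL-Real_Asymp.Real_Asymp"
begin

(* The decoder treats the M chunks separately.  For the received chunk y and the channel set
   Vs ! m it keeps the chunks x of type P whose empirical conditional entropy H(x|y) (computed
   from the joint type of (x, y)) is at most the largest H(X|Y) over the channels of Vs ! m
   that are delta-close to the type of y, plus slack xi/2; the list consists of the words all
   of whose chunks are kept.

   Then the three claims: the rate is the size of the type class; the list
   size is a product of method-of-types counts; for the error, if the joint type of the sent
   and received chunk is entry-wise close to P(a)V(b|a), V the chunk's average channel, then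
   V is delta-close to the output type and the sent chunk passes the entropy test (by
   continuity), while each such deviation has exponentially small probability (Chernoff plus a
   union bound).  Finally c is taken so large that the polynomial factors are absorbed. *)


lemma finite_words: "finite {ys::'b::finite list. length ys = n}"
  using finite_lists_length_eq[of "UNIV::'b set" n] by simp

lemma sum_words_prod:
  fixes f :: "nat \<Rightarrow> 'b::finite \<Rightarrow> real"
  shows "(\<Sum>ys\<in>{ys. length ys = n}. \<Prod>t<n. f t (ys!t)) = (\<Prod>t<n. \<Sum>b\<in>UNIV. f t b)"
proof (induction n arbitrary: f)
  case 0
  have "{ys::'b list. length ys = 0} = {[]}" by auto
  then show ?case by simp
next
  case (Suc n)
  have words: "{ys::'b list. length ys = Suc n} = (\<lambda>(b,zs). b#zs) ` (UNIV \<times> {ys. length ys = n})"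
    by (auto simp: length_Suc_conv image_iff)
  have inj: "inj_on (\<lambda>(b,zs). b#zs) (UNIV \<times> {ys::'b list. length ys = n})"
    by (auto simp: inj_on_def)
  have "(\<Sum>ys\<in>{ys. length ys = Suc n}. \<Prod>t<Suc n. f t (ys!t))
      = (\<Sum>(b,zs)\<in>UNIV \<times> {ys::'b list. length ys = n}. \<Prod>t<Suc n. f t ((b#zs)!t))"
    unfolding words by (subst sum.reindex[OF inj]) (simp add: case_prod_unfold)
  also have "\<dots> = (\<Sum>(b,zs)\<in>UNIV \<times> {ys::'b list. length ys = n}. f 0 b * (\<Prod>t<n. f (Suc t) (zs!t)))"
    by (intro sum.cong refl) (auto simp del: prod.lessThan_Suc simp: prod.lessThan_Suc_shift)
  also have "\<dots> = (\<Sum>b\<in>UNIV. f 0 b) * (\<Sum>zs\<in>{ys::'b list. length ys = n}. \<Prod>t<n. f (Suc t) (zs!t))"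
    by (simp add: sum_product sum.cartesian_product)
  also have "\<dots> = (\<Sum>b\<in>UNIV. f 0 b) * (\<Prod>t<n. \<Sum>b\<in>UNIV. f (Suc t) b)"
    using Suc.IH[of "\<lambda>t. f (Suc t)"] by simp
  also have "\<dots> = (\<Prod>t<Suc n. \<Sum>b\<in>UNIV. f t b)"
    by (simp only: prod.lessThan_Suc_shift)
  finally show ?case .
qed


subsection \<open>A Chernoff bound\<close>

lemma exp_le_quad:
  fixes u :: real assumes "\<bar>u\<bar> \<le> 1" shows "exp u \<le> 1 + u + u^2"
proof (cases "u \<ge> 0")
  case True then show ?thesis using exp_bound[of u] assms by auto
next
  case False
  define w where "w = -u"
  have w: "0 < w" "w \<le> 1" using False assms by (auto simp: w_def)
  have pos: "1 - w + w^2 > 0" using w by (simp add: power2_eq_square) (smt (verit) mult_pos_pos)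
  have "1 \<le> 1 + w^3" using w by simp
  also have "\<dots> = (1+w) * (1 - w + w^2)" by (simp add: algebra_simps power2_eq_square power3_eq_cube)
  also have "\<dots> \<le> exp w * (1 - w + w^2)"
    using pos exp_ge_add_one_self[of w] by (intro mult_right_mono) auto
  finally have "exp (-w) \<le> 1 - w + w^2"
    by (simp add: exp_minus field_simps)
  then show ?thesis by (simp add: w_def)
qed

lemma centred_mgf_le:
  fixes p g :: "'b::finite \<Rightarrow> real" and lam :: real
  assumes p0: "\<And>b. p b \<ge> 0" and p1: "(\<Sum>b\<in>UNIV. p b) = 1"
    and g1: "\<And>b. \<bar>g b\<bar> \<le> 1" and l: "0 \<le> lam" "lam \<le> 1/2"
  shows "(\<Sum>b\<in>UNIV. p b * exp (lam * (g b - (\<Sum>b'\<in>UNIV. p b' * g b')))) \<le> exp (4 * lam^2)"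
proof -
  define mu where "mu = (\<Sum>b\<in>UNIV. p b * g b)"
  have "\<bar>mu\<bar> \<le> (\<Sum>b\<in>UNIV. \<bar>p b * g b\<bar>)" unfolding mu_def by (rule sum_abs)
  also have "\<dots> \<le> (\<Sum>b\<in>UNIV. p b)"
    by (intro sum_mono) (use p0 g1 in \<open>auto simp: abs_mult intro: mult_left_le\<close>)
  finally have mu1: "\<bar>mu\<bar> \<le> 1" using p1 by simp
  have quad: "p b * exp (lam * (g b - mu)) \<le> p b * (1 + lam * (g b - mu) + 4 * lam^2)" for b
  proof -
    have d: "\<bar>g b - mu\<bar> \<le> 2" using g1[of b] mu1 by auto
    have u: "\<bar>lam * (g b - mu)\<bar> \<le> 1" and u2: "\<bar>lam * (g b - mu)\<bar> \<le> lam * 2"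
      using mult_left_mono[OF d l(1)] l by (simp_all add: abs_mult)
    have "(lam * (g b - mu))^2 = \<bar>lam * (g b - mu)\<bar>^2" by simp
    also have "\<dots> \<le> (lam * 2)^2" by (intro power_mono u2) simp
    finally have "exp (lam * (g b - mu)) \<le> 1 + lam * (g b - mu) + 4 * lam^2"
      using exp_le_quad[OF u] by (simp add: power_mult_distrib)
    then show ?thesis using p0 by (intro mult_left_mono) auto
  qed
  have "(\<Sum>b\<in>UNIV. p b * exp (lam * (g b - mu)))
      \<le> (\<Sum>b\<in>UNIV. p b * (1 + lam * (g b - mu) + 4 * lam^2))" by (intro sum_mono quad)
  also have "\<dots> = (\<Sum>b\<in>UNIV. p b) * (1 + 4*lam^2) + lam * (\<Sum>b\<in>UNIV. p b * g b)
      - lam * mu * (\<Sum>b\<in>UNIV. p b)"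
    by (simp add: algebra_simps sum.distrib sum_distrib_left sum_subtractf sum_distrib_right)
  also have "\<dots> = 1 + 4 * lam^2" using p1 by (simp add: mu_def)
  also have "\<dots> \<le> exp (4 * lam^2)" by (rule exp_ge_add_one_self)
  finally show ?thesis unfolding mu_def .
qed

text \<open>Letters are drawn independently, letter t with law p t.\<close>

lemma chernoff_bound:
  fixes p g :: "nat \<Rightarrow> 'b::finite \<Rightarrow> real" and lam a :: real
  assumes p0: "\<And>t b. p t b \<ge> 0" and p1: "\<And>t. t < n \<Longrightarrow> (\<Sum>b\<in>UNIV. p t b) = 1"
    and g1: "\<And>t b. \<bar>g t b\<bar> \<le> 1" and gI: "\<And>t b. t \<notin> I \<Longrightarrow> g t b = 0"
    and l: "0 \<le> lam" "lam \<le> 1/2"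
  shows "(\<Sum>ys\<in>{ys. length ys = n}.
      if (\<Sum>t<n. g t (ys!t) - (\<Sum>b\<in>UNIV. p t b * g t b)) \<ge> a then \<Prod>t<n. p t (ys!t) else 0)
     \<le> exp (4 * lam^2 * card (I \<inter> {..<n}) - lam * a)"
proof -
  define mu where "mu t = (\<Sum>b\<in>UNIV. p t b * g t b)" for t
  text \<open>Markov's inequality for \<open>exp (\<lambda> \<cdot> deviation)\<close>, word by word.\<close>
  have markov: "(if (\<Sum>t<n. g t (ys!t) - mu t) \<ge> a then \<Prod>t<n. p t (ys!t) else 0)
      \<le> (\<Prod>t<n. p t (ys!t) * exp (lam * (g t (ys!t) - mu t))) * exp (- lam * a)" for ys
  proof -
    have "(\<Prod>t<n. p t (ys!t) * exp (lam * (g t (ys!t) - mu t))) * exp (- lam * a)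
        = (\<Prod>t<n. p t (ys!t)) * exp (lam * ((\<Sum>t<n. g t (ys!t) - mu t) - a))"
    proof -
      have "(\<Prod>t<n. p t (ys!t) * exp (lam * (g t (ys!t) - mu t)))
          = (\<Prod>t<n. p t (ys!t)) * exp (\<Sum>t<n. lam * (g t (ys!t) - mu t))"
        by (simp add: prod.distrib exp_sum)
      also have "(\<Sum>t<n. lam * (g t (ys!t) - mu t)) = lam * (\<Sum>t<n. g t (ys!t) - mu t)"
        by (simp add: sum_distrib_left)
      finally show ?thesis by (simp add: mult.assoc mult_exp_exp right_diff_distrib)
    qed
    moreover have "(\<Prod>t<n. p t (ys!t)) \<ge> 0" using p0 by (simp add: prod_nonneg)
    moreover have "(\<Sum>t<n. g t (ys!t) - mu t) \<ge> a \<Longrightarrow> 1 \<le> exp (lam * ((\<Sum>t<n. g t (ys!t) - mu t) - a))"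
      using l by simp
    ultimately show ?thesis by (simp add: mult_le_cancel_left1)
  qed
  have mgf: "(\<Sum>b\<in>UNIV. p t b * exp (lam * (g t b - mu t))) \<le> (if t \<in> I then exp (4 * lam^2) else 1)"
    if t: "t < n" for t
    using centred_mgf_le[OF p0 p1[OF t] g1 l] gI p1[OF t] by (auto simp: mu_def)
  have "(\<Sum>ys\<in>{ys. length ys = n}.
      if (\<Sum>t<n. g t (ys!t) - mu t) \<ge> a then \<Prod>t<n. p t (ys!t) else 0)
      \<le> (\<Sum>ys\<in>{ys. length ys = n}. (\<Prod>t<n. p t (ys!t) * exp (lam * (g t (ys!t) - mu t)))) * exp (- lam * a)"
    unfolding sum_distrib_right by (intro sum_mono markov)
  also have "(\<Sum>ys\<in>{ys. length ys = n}. (\<Prod>t<n. p t (ys!t) * exp (lam * (g t (ys!t) - mu t))))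
      = (\<Prod>t<n. \<Sum>b\<in>UNIV. p t b * exp (lam * (g t b - mu t)))"
    by (rule sum_words_prod[where f = "\<lambda>t b. p t b * exp (lam * (g t b - mu t))"])
  also have "\<dots> \<le> (\<Prod>t<n. if t \<in> I then exp (4 * lam^2) else 1)"
    using p0 mgf by (intro prod_mono conjI sum_nonneg) auto
  also have "\<dots> = exp (4 * lam^2 * card (I \<inter> {..<n}))"
    by (simp add: prod.If_cases Int_commute exp_of_nat_mult[symmetric] mult.commute)
  finally show ?thesis unfolding mu_def
    by (simp add: mult_exp_exp algebra_simps)
qed


lemma chunk_end_le: "(m::nat) < M \<Longrightarrow> m * c + c \<le> M * c"
  by (metis add.commute mult_Suc less_eq_Suc_le mult_le_mono1)

lemma chunk_length: "m < M \<Longrightarrow> length xs = M * c \<Longrightarrow> length (chunk c m xs) = c"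
  using chunk_end_le[of m M c] by (simp add: chunk_def)

lemma chunk_nth: "m < M \<Longrightarrow> length xs = M * c \<Longrightarrow> i < c \<Longrightarrow> chunk c m xs ! i = xs ! (m * c + i)"
  by (simp add: chunk_def)

lemma chunk_append: "length u = M * c \<Longrightarrow> m < M \<Longrightarrow> chunk c m (u @ w) = chunk c m u"
  using chunk_end_le[of m M c] by (simp add: chunk_def)

lemma chunk_append_last: "length u = M * c \<Longrightarrow> length w = c \<Longrightarrow> chunk c M (u @ w) = w"
  by (simp add: chunk_def)

lemma card_chunks:
  assumes "\<And>m. m < M \<Longrightarrow> S m \<subseteq> {xs. length xs = c}"
  shows "card {xs. length xs = M * c \<and> (\<forall>m<M. chunk c m xs \<in> S m)} = (\<Prod>m<M. card (S m))"
  using assms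
proof (induction M)
  case 0
  have "{xs. length xs = 0 * c \<and> (\<forall>m<0. chunk c m xs \<in> S m)} = {[]}" by auto
  then show ?case by simp
next
  case (Suc M)
  let ?A = "{xs. length xs = M * c \<and> (\<forall>m<M. chunk c m xs \<in> S m)}"
  have split: "(\<forall>m<Suc M. chunk c m xs \<in> S m) \<longleftrightarrow> (\<forall>m<M. chunk c m u \<in> S m) \<and> w \<in> S M"
    if uw: "xs = u @ w" "length u = M * c" "length w = c" for xs u w
  proof -
    have "chunk c m xs = chunk c m u" if "m < M" for m using chunk_append[OF uw(2) that] uw(1) by simp
    moreover have "chunk c M xs = w" using chunk_append_last[OF uw(2,3)] uw(1) by simp
    ultimately show ?thesis by (auto simp: less_Suc_eq)
  qed
  have eq: "{xs. length xs = Suc M * c \<and> (\<forall>m<Suc M. chunk c m xs \<in> S m)} = (\<lambda>(u,w). u @ w) ` (?A \<times> S M)"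
  proof (intro set_eqI iffI)
    fix xs assume xs: "xs \<in> {xs. length xs = Suc M * c \<and> (\<forall>m<Suc M. chunk c m xs \<in> S m)}"
    then have "take (M*c) xs \<in> ?A \<and> drop (M*c) xs \<in> S M"
      using split[of xs "take (M*c) xs" "drop (M*c) xs"] by simp
    then show "xs \<in> (\<lambda>(u,w). u @ w) ` (?A \<times> S M)"
      by (intro image_eqI[of _ _ "(take (M*c) xs, drop (M*c) xs)"]) auto
  next
    fix xs assume "xs \<in> (\<lambda>(u,w). u @ w) ` (?A \<times> S M)"
    then obtain u w where uw: "xs = u @ w" "u \<in> ?A" "w \<in> S M" by auto
    then have "length w = c" using Suc.prems[of M] by auto
    with uw split[OF uw(1)] show "xs \<in> {xs. length xs = Suc M * c \<and> (\<forall>m<Suc M. chunk c m xs \<in> S m)}"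
      by simp
  qed
  have inj: "inj_on (\<lambda>(u,w). u @ w) (?A \<times> S M)"
    by (auto simp: inj_on_def)
  show ?case unfolding eq card_image[OF inj] card_cartesian_product using Suc by simp
qed

lemma sum_over_chunk:
  fixes F :: "nat \<Rightarrow> real"
  assumes m: "m < M"
  shows "(\<Sum>t<M*c. if t \<in> {m*c..<m*c+c} then F t else 0) = (\<Sum>i<c. F (m*c+i))"
proof -
  have block: "{m*c..<m*c+c} = (\<lambda>i. m*c+i) ` {..<c}"
  proof (intro set_eqI iffI)
    fix x assume "x \<in> {m*c..<m*c+c}"
    then have "x = m*c + (x - m*c)" "x - m*c < c" by auto
    then show "x \<in> (\<lambda>i. m*c+i) ` {..<c}" by (metis imageI lessThan_iff)
  qed auto
  have "{m*c..<m*c+c} \<subseteq> {..<M*c}" using chunk_end_le[OF m, of c] by auto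
  then have "{..<M*c} \<inter> {m*c..<m*c+c} = {m*c..<m*c+c}" by blast
  then have "(\<Sum>t<M*c. if t \<in> {m*c..<m*c+c} then F t else 0) = (\<Sum>t\<in>{m*c..<m*c+c}. F t)"
    using sum.inter_restrict[of "{..<M*c}" F "{m*c..<m*c+c}"] by simp
  also have "\<dots> = (\<Sum>i<c. F (m*c+i))"
    unfolding block by (subst sum.reindex) (auto simp: inj_on_def)
  finally show ?thesis .
qed


subsection \<open>The size of a type class\<close>

lemma fact_lower: "real n ^ n \<le> fact n * exp (real n)"
proof (induction n)
  case 0 then show ?case by simp
next
  case (Suc n)
  show ?case
  proof (cases "n = 0")
    case True then show ?thesis by (simp add: exp_ge_add_one_self[of 1, simplified])
  next
    case False
    have npos: "real n > 0" using False by simp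
    have b: "(1 + 1 / real n) ^ n \<le> exp 1"
      using exp_ge_one_plus_x_over_n_power_n[where x=1 and n=n] False by simp
    have "(1 + 1 / real n) ^ n = (real n + 1) ^ n / real n ^ n"
      using False by (simp add: field_simps power_divide)
    then have "(real n + 1) ^ n \<le> exp 1 * real n ^ n" using b npos
      by (simp add: divide_le_eq)
    then have "real (Suc n) ^ Suc n \<le> (real n + 1) * (exp 1 * real n ^ n)"
      by (simp add: add.commute mult_left_mono)
    also have "\<dots> \<le> (real n + 1) * (exp 1 * (fact n * exp (real n)))"
      using Suc.IH by (intro mult_left_mono) auto
    also have "\<dots> = fact (Suc n) * exp (real (Suc n))"
      by (simp add: exp_add algebra_simps)
    finally show ?thesis .
  qed
qed

lemma ln_one_plus_inv: "n > 0 \<Longrightarrow> 1 / (real n + 1) \<le> ln (1 + 1 / real n)"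
proof -
  assume n: "n > 0"
  have "ln (1 - 1/(real n + 1)) \<le> - (1/(real n + 1))"
    using n by (intro ln_one_minus_pos_upper_bound) (auto simp: field_simps)
  moreover have "1 - 1/(real n + 1) = inverse (1 + 1 / real n)"
    using n by (simp add: field_simps)
  moreover have "ln (inverse (1 + 1 / real n)) = - ln (1 + 1 / real n)"
    using n by (subst ln_inverse) (auto simp: add_pos_pos)
  ultimately show ?thesis by simp
qed

lemma fact_upper: "n \<ge> 1 \<Longrightarrow> fact n * exp (real n) \<le> exp 1 * real n * real n ^ n"
proof (induction n rule: dec_induct)
  case base then show ?case by simp
next
  case (step n)
  have n: "n > 0" using step by simp
  have y: "1 + 1 / real n > 0" using n by (simp add: add_pos_pos)
  have "1 \<le> (real n + 1) * ln (1 + 1 / real n)"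
    using ln_one_plus_inv[OF n] by (simp add: field_simps)
  then have "exp 1 \<le> exp ((real n + 1) * ln (1 + 1 / real n))" by simp
  also have "\<dots> = exp (ln (1 + 1 / real n)) ^ (n+1)"
    by (metis exp_of_nat_mult of_nat_Suc Suc_eq_plus1 add.commute)
  also have "\<dots> = (1 + 1 / real n) ^ (n+1)"
    using y by simp
  also have "\<dots> = (real n + 1) ^ (n+1) / real n ^ (n+1)"
    using n by (simp add: field_simps power_divide)
  finally have e: "exp 1 * real n ^ (n+1) \<le> (real n + 1) ^ (n+1)"
    using n by (simp add: le_divide_eq)
  have "fact (Suc n) * exp (real (Suc n)) = (real n + 1) * exp 1 * (fact n * exp (real n))"
    by (simp add: exp_add algebra_simps)
  also have "\<dots> \<le> (real n + 1) * exp 1 * (exp 1 * real n * real n ^ n)"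
    using step.IH by (intro mult_left_mono) auto
  also have "\<dots> = (real n + 1) * exp 1 * (exp 1 * real n ^ (n+1))" by simp
  also have "\<dots> \<le> (real n + 1) * exp 1 * (real n + 1) ^ (n+1)"
    using e by (intro mult_left_mono) auto
  also have "\<dots> = exp 1 * real (Suc n) * real (Suc n) ^ Suc n" by (simp add: add.commute)
  finally show ?case .
qed

lemma ln_fact_lower: "n \<ge> 1 \<Longrightarrow> real n * ln (real n) - real n \<le> ln (fact n)"
proof -
  assume n: "n \<ge> 1"
  have "ln (real n ^ n) \<le> ln (fact n * exp (real n))"
    using fact_lower[of n] n by (subst ln_le_cancel_iff) auto
  then show ?thesis using n by (simp add: ln_mult ln_realpow)
qed

lemma ln_fact_upper: "n \<ge> 1 \<Longrightarrow> ln (fact n) \<le> 1 + ln (real n) + real n * ln (real n) - real n"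
proof -
  assume n: "n \<ge> 1"
  have "ln (fact n * exp (real n)) \<le> ln (exp 1 * real n * real n ^ n)"
    using fact_upper[OF n] n by (subst ln_le_cancel_iff) auto
  then show ?thesis using n by (simp add: ln_mult ln_realpow)
qed

lemma ln_multinomial_lower:
  fixes K :: "'a::finite \<Rightarrow> nat"
  assumes Kpos: "\<And>a. K a \<ge> 1" and sumK: "(\<Sum>a\<in>UNIV. K a) = c"
  shows "real c * ln (real c) - (\<Sum>a\<in>UNIV. real (K a) * ln (real (K a))) - real CARD('a) * (1 + ln (real c))
    \<le> ln (fact c) - (\<Sum>a\<in>UNIV. ln (fact (K a)))"
proof -
  have c: "c \<ge> 1"
    using member_le_sum[of undefined UNIV K] Kpos[of undefined] sumK by simp
  have "(\<Sum>a\<in>UNIV. ln (fact (K a)))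
      \<le> (\<Sum>a\<in>UNIV. 1 + ln (real (K a)) + real (K a) * ln (real (K a)) - real (K a))"
    by (intro sum_mono ln_fact_upper Kpos)
  also have "\<dots> \<le> (\<Sum>a\<in>UNIV. 1 + ln (real c) + real (K a) * ln (real (K a)) - real (K a))"
  proof (intro sum_mono)
    fix a
    have "K a \<le> c" using sumK member_le_sum[of a UNIV K] by simp
    then show "1 + ln (real (K a)) + real (K a) * ln (real (K a)) - real (K a)
      \<le> 1 + ln (real c) + real (K a) * ln (real (K a)) - real (K a)" using Kpos[of a] by simp
  qed
  also have "\<dots> = real CARD('a) * (1 + ln (real c)) + (\<Sum>a\<in>UNIV. real (K a) * ln (real (K a))) - real c"
    using sumK by (simp add: sum.distrib sum_subtractf of_nat_sum[symmetric] del: of_nat_sum)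
  finally show ?thesis using ln_fact_lower[OF c] by linarith
qed

text \<open>With multiplicities \<open>K a = c P a \<ge> 1\<close>, the type class of P is the set of permutations
  of a multiset, hence has multinomial size \<open>c! / \<Prod>a. (K a)!\<close>.\<close>

lemma typeclass_card_multinomial:
  fixes P :: "'a::finite \<Rightarrow> real" and K :: "'a \<Rightarrow> nat"
  assumes K: "\<And>a. real (K a) = real c * P a" and Kpos: "\<And>a. K a \<ge> 1"
    and sumK: "(\<Sum>a\<in>UNIV. K a) = c"
  shows "real (card (typeclass_set P c)) * (\<Prod>a\<in>UNIV. fact (K a)) = fact c"
proof -
  define Mu where "Mu = (\<Sum>a\<in>UNIV. replicate_mset (K a) a)"
  have cnt: "count Mu a = K a" for a
    unfolding Mu_def by (simp add: count_sum)
  have size: "size Mu = c"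
    unfolding Mu_def by (simp add: sumK)
  have setM: "set_mset Mu = UNIV"
  proof -
    have "x \<in># Mu" for x using Kpos[of x] cnt[of x] by (simp add: count_greater_zero_iff[symmetric])
    then show ?thesis by auto
  qed
  have tc: "typeclass_set P c = permutations_of_multiset Mu"
  proof (intro set_eqI iffI)
    fix xs assume "xs \<in> typeclass_set P c"
    then have "count_list xs a = K a" for a unfolding typeclass_set_def
      using K by (metis (mono_tags, lifting) mem_Collect_eq of_nat_eq_iff)
    then show "xs \<in> permutations_of_multiset Mu"
      by (auto simp: permutations_of_multiset_def multiset_eq_iff count_mset cnt)
  next
    fix xs assume "xs \<in> permutations_of_multiset Mu"
    then have m: "mset xs = Mu" by (simp add: permutations_of_multiset_def)
    then have "length xs = c" using size by (metis size_mset)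
    moreover have "real (count_list xs a) = real c * P a" for a
      using m cnt K by (metis count_mset)
    ultimately show "xs \<in> typeclass_set P c" by (simp add: typeclass_set_def)
  qed
  show ?thesis
    using card_permutations_of_multiset_aux[of Mu] unfolding tc setM cnt size
    by (metis (mono_tags, lifting) of_nat_fact of_nat_mult of_nat_prod prod.cong)
qed

lemma typeclass_card:
  fixes P :: "'a::finite \<Rightarrow> real"
  assumes pd: "is_pd P" and pos: "\<forall>a. P a > 0" and c: "c \<ge> 1"
    and int: "\<forall>a. \<exists>k::nat. real c * P a = real k"
  shows "exp (real c * entropy P - real CARD('a) * (1 + ln (real c))) \<le> real (card (typeclass_set P c))"
proof -
  obtain K :: "'a \<Rightarrow> nat" where K: "\<And>a. real (K a) = real c * P a"
    using int by metis
  have Kpos: "K a \<ge> 1" for a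
  proof -
    have "real c * P a > 0" using c pos by simp
    then show ?thesis using K[of a] by simp
  qed
  have "(\<Sum>a\<in>UNIV. real (K a)) = real c"
    using pd by (simp add: K is_pd_def sum_distrib_left[symmetric])
  then have sumK: "(\<Sum>a\<in>UNIV. K a) = c"
    by (metis of_nat_eq_iff of_nat_sum)
  note multinomial = typeclass_card_multinomial[OF K Kpos sumK]
  have pf: "(\<Prod>a\<in>UNIV. fact (K a) :: real) > 0" by (intro prod_pos) auto
  then have cardpos: "real (card (typeclass_set P c)) > 0"
    using multinomial by (metis fact_gt_zero zero_less_mult_pos2)
  have "ln (fact c) = ln (real (card (typeclass_set P c))) + ln (\<Prod>a\<in>UNIV. fact (K a) :: real)"
    using cardpos pf by (simp add: ln_mult flip: multinomial)
  also have "ln (\<Prod>a\<in>UNIV. fact (K a) :: real) = (\<Sum>a\<in>UNIV. ln (fact (K a)))"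
    by (rule ln_prod) auto
  finally have lncard: "ln (real (card (typeclass_set P c))) = ln (fact c) - (\<Sum>a\<in>UNIV. ln (fact (K a)))"
    by simp
  have "(\<Sum>a\<in>UNIV. real (K a) * ln (real (K a))) = (\<Sum>a\<in>UNIV. real c * P a * (ln (real c) + ln (P a)))"
    using c pos by (intro sum.cong refl) (simp add: K ln_mult)
  also have "\<dots> = real c * ln (real c) * (\<Sum>a\<in>UNIV. P a) + real c * (\<Sum>a\<in>UNIV. P a * ln (P a))"
    by (simp add: algebra_simps sum.distrib sum_distrib_left sum_distrib_right)
  also have "\<dots> = real c * ln (real c) - real c * entropy P"
    using pd pos unfolding entropy_def is_pd_def by (simp add: less_imp_neq[symmetric])
  finally have "real c * entropy P - real CARD('a) * (1 + ln (real c)) \<le> ln (real (card (typeclass_set P c)))"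
    using ln_multinomial_lower[OF Kpos sumK] unfolding lncard by linarith
  then show ?thesis using cardpos by (metis exp_le_cancel_iff exp_ln)
qed


lemma concat_type_class_card:
  fixes P :: "'a::finite \<Rightarrow> real"
  assumes pd: "is_pd P" and pos: "\<forall>a. P a > 0" and c: "c \<ge> 1"
    and int: "\<forall>a. \<exists>k::nat. real c * P a = real k"
    and large: "real CARD('a) * (1 + ln (real c)) \<le> real c * \<xi>"
  shows "exp (real (M * c) * (entropy P - \<xi>)) \<le> real (card (concat_type_class P c M))"
proof -
  have "exp (real c * (entropy P - \<xi>)) \<le> exp (real c * entropy P - real CARD('a) * (1 + ln (real c)))"
    using large by (simp add: algebra_simps)
  also have "\<dots> \<le> real (card (typeclass_set P c))" by (rule typeclass_card[OF pd pos c int])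
  finally have "exp (real c * (entropy P - \<xi>)) ^ M \<le> real (card (typeclass_set P c)) ^ M"
    by (intro power_mono) simp_all
  moreover have "card (concat_type_class P c M) = card (typeclass_set P c) ^ M"
    using card_chunks[of M "\<lambda>_. typeclass_set P c" c]
    by (simp add: concat_type_class_def typeclass_set_def subset_iff)
  ultimately show ?thesis
    by (simp add: exp_of_nat_mult[symmetric] algebra_simps)
qed


subsection \<open>Joint types and the empirical conditional entropy\<close>

definition joint_count :: "'a list \<Rightarrow> 'b list \<Rightarrow> 'a \<Rightarrow> 'b \<Rightarrow> nat" where
  "joint_count xs ys a b = card {i. i < length ys \<and> xs!i = a \<and> ys!i = b}"

definition joint_cond_entropy :: "('a::finite \<Rightarrow> 'b::finite \<Rightarrow> real) \<Rightarrow> real" where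
  "joint_cond_entropy q = - (\<Sum>a\<in>UNIV. \<Sum>b\<in>UNIV.
      if q a b = 0 then 0 else q a b * ln (q a b / (\<Sum>a'\<in>UNIV. q a' b)))"

definition emp_cond_entropy :: "'a::finite list \<Rightarrow> 'b::finite list \<Rightarrow> real" where
  "emp_cond_entropy xs ys = joint_cond_entropy (\<lambda>a b. real (joint_count xs ys a b) / real (length ys))"

lemma cond_entropy_joint: "cond_entropy P V = joint_cond_entropy (\<lambda>a b. P a * V a b)"
  unfolding cond_entropy_def joint_cond_entropy_def out_dist_def by simp

lemma card_as_sum: "real (card {i. i < (n::nat) \<and> Q i}) = (\<Sum>i<n. if Q i then 1 else 0)"
proof -
  have "(\<Sum>i<n. if Q i then 1 else 0) = (\<Sum>i\<in>{i\<in>{..<n}. Q i}. 1::real)"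
    by (rule sum.inter_filter[symmetric]) simp
  also have "{i\<in>{..<n}. Q i} = {i. i < n \<and> Q i}" by auto
  finally show ?thesis by simp
qed

lemma joint_count_sum:
  "real (joint_count xs ys a b) = (\<Sum>i<length ys. if xs!i = a \<and> ys!i = b then 1 else 0)"
  unfolding joint_count_def by (rule card_as_sum)

lemma count_list_sum: "real (count_list xs a) = (\<Sum>i<length xs. if xs!i = a then 1 else 0)"
proof -
  have "count_list xs a = card {i. i < length xs \<and> xs!i = a}"
    by (simp add: count_list_eq_length_filter length_filter_conv_card eq_commute)
  then show ?thesis using card_as_sum by simp
qed

lemma sum_joint_count: "(\<Sum>a\<in>(UNIV::'a::finite set). real (joint_count xs ys a b)) = real (count_list ys b)"
  unfolding joint_count_sum count_list_sum
  by (subst sum.swap) (auto intro!: sum.cong simp: sum.delta)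

lemma total_joint_count:
  "(\<Sum>a\<in>(UNIV::'a::finite set). \<Sum>b\<in>(UNIV::'b::finite set). real (joint_count xs ys a b)) = real (length ys)"
proof -
  have "(\<Sum>a\<in>(UNIV::'a set). \<Sum>b\<in>(UNIV::'b set). real (joint_count xs ys a b))
      = (\<Sum>b\<in>UNIV. real (count_list ys b))"
    by (subst sum.swap) (simp add: sum_joint_count)
  also have "\<dots> = real (length ys)"
    using sum_count_set[of ys "UNIV::'b set"] by (simp flip: of_nat_sum)
  finally show ?thesis .
qed

lemma sum_by_joint_type:
  fixes f :: "'a::finite \<Rightarrow> 'b::finite \<Rightarrow> real"
  shows "(\<Sum>i<length ys. f (xs!i) (ys!i)) = (\<Sum>a\<in>UNIV. \<Sum>b\<in>UNIV. real (joint_count xs ys a b) * f a b)"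
proof -
  have "(\<Sum>a\<in>UNIV. \<Sum>b\<in>UNIV. real (joint_count xs ys a b) * f a b)
     = (\<Sum>a\<in>UNIV. \<Sum>b\<in>UNIV. \<Sum>i<length ys. if xs!i = a \<and> ys!i = b then f a b else 0)"
    unfolding joint_count_sum sum_distrib_right by (intro sum.cong refl) simp
  also have "\<dots> = (\<Sum>i<length ys. \<Sum>a\<in>UNIV. \<Sum>b\<in>UNIV. if xs!i = a \<and> ys!i = b then f a b else 0)"
    by (simp add: sum.swap[of _ UNIV "{..<length ys}"] sum.swap[of _ UNIV "UNIV::'b set"])
  also have "\<dots> = (\<Sum>i<length ys. f (xs!i) (ys!i))"
  proof (intro sum.cong refl)
    fix i
    have "(\<Sum>b\<in>UNIV. if xs!i = a \<and> ys!i = b then f a b else 0) = (if xs!i = a then f a (ys!i) else 0)" for a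
      by (cases "xs!i = a") (simp_all add: sum.delta sum.delta')
    then show "(\<Sum>a\<in>UNIV. \<Sum>b\<in>UNIV. if xs!i = a \<and> ys!i = b then f a b else 0) = f (xs!i) (ys!i)"
      by (simp add: sum.delta sum.delta')
  qed
  finally show ?thesis by simp
qed

lemma joint_count_pos: "i < length ys \<Longrightarrow> joint_count xs ys (xs!i) (ys!i) \<ge> 1"
proof -
  assume i: "i < length ys"
  have "i \<in> {j. j < length ys \<and> xs!j = xs!i \<and> ys!j = ys!i}" using i by simp
  then have "card {j. j < length ys \<and> xs!j = xs!i \<and> ys!j = ys!i} > 0"
    by (subst card_gt_0_iff) auto
  then show ?thesis unfolding joint_count_def by linarith
qed

lemma joint_count_le_count:
  fixes xs :: "'a::finite list" shows "joint_count xs ys a b \<le> count_list ys b"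
  using sum_joint_count[of xs ys b] member_le_sum[of a UNIV "\<lambda>a. real (joint_count xs ys a b)"]
  by simp

lemma emp_cond_entropy_alt:
  fixes xs :: "'a::finite list" and ys :: "'b::finite list"
  assumes n: "length ys > 0"
  shows "- real (length ys) * emp_cond_entropy xs ys = (\<Sum>a\<in>UNIV. \<Sum>b\<in>UNIV.
     real (joint_count xs ys a b) * ln (real (joint_count xs ys a b) / real (count_list ys b)))"
proof -
  let ?n = "real (length ys)"
  have s: "(\<Sum>a'\<in>UNIV. real (joint_count xs ys a' b) / ?n) = real (count_list ys b) / ?n" for b
    by (simp add: sum_divide_distrib[symmetric] sum_joint_count)
  have "- ?n * emp_cond_entropy xs ys = ?n * (\<Sum>a\<in>UNIV. \<Sum>b\<in>UNIV. (if real (joint_count xs ys a b) / ?n = 0 then 0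
      else real (joint_count xs ys a b) / ?n * ln (real (joint_count xs ys a b) / ?n / (real (count_list ys b) / ?n))))"
    unfolding emp_cond_entropy_def joint_cond_entropy_def s by simp
  also have "\<dots> = (\<Sum>a\<in>UNIV. \<Sum>b\<in>UNIV. ?n * (if real (joint_count xs ys a b) / ?n = 0 then 0
      else real (joint_count xs ys a b) / ?n * ln (real (joint_count xs ys a b) / ?n / (real (count_list ys b) / ?n))))"
    by (simp only: sum_distrib_left)
  also have "\<dots> = (\<Sum>a\<in>UNIV. \<Sum>b\<in>UNIV. real (joint_count xs ys a b) * ln (real (joint_count xs ys a b) / real (count_list ys b)))"
    using n by (intro sum.cong refl) auto
  finally show ?thesis .
qed

text \<open>Method of types: the words x with the same joint type with y as a given x0 number at
  most \<open>exp (n H(x0|y))\<close>.  Each of them has probability \<open>exp (-n H(x0|y))\<close> under the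
  conditional law \<open>N(a,b)/N(b)\<close> letter by letter.\<close>

lemma joint_type_class_card:
  fixes x0 :: "'a::finite list" and ys :: "'b::finite list"
  assumes n: "length ys = n" "n > 0" and x0: "length x0 = n"
  shows "real (card {xs. length xs = n \<and> (\<forall>a b. joint_count xs ys a b = joint_count x0 ys a b)})
    \<le> exp (real n * emp_cond_entropy x0 ys)"
proof -
  define K where "K = joint_count x0 ys"
  define T where "T a b = real (K a b) / real (count_list ys b)" for a b
  define Fib where "Fib = {xs::'a list. length xs = n \<and> (\<forall>a b. joint_count xs ys a b = K a b)}"
  have T0: "T a b \<ge> 0" for a b by (simp add: T_def)
  have total: "(\<Sum>xs\<in>{xs. length xs = n}. \<Prod>i<n. T (xs!i) (ys!i)) = 1"
  proof -
    have "(\<Sum>xs\<in>{xs. length xs = n}. \<Prod>i<n. T (xs!i) (ys!i)) = (\<Prod>i<n. \<Sum>a\<in>UNIV. T a (ys!i))"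
      by (rule sum_words_prod[where f = "\<lambda>i a. T a (ys!i)"])
    also have "\<dots> = (\<Prod>i<n. 1)"
    proof (intro prod.cong refl)
      fix i assume i: "i \<in> {..<n}"
      have "count_list ys (ys!i) \<ge> 1"
        using joint_count_pos[of i ys x0] joint_count_le_count[of x0 ys "x0!i" "ys!i"] i n by simp
      then show "(\<Sum>a\<in>UNIV. T a (ys!i)) = 1"
        unfolding T_def K_def by (simp add: sum_divide_distrib[symmetric] sum_joint_count)
    qed
    finally show ?thesis by simp
  qed
  have val: "(\<Prod>i<n. T (xs!i) (ys!i)) = exp (- real n * emp_cond_entropy x0 ys)" if xs: "xs \<in> Fib" for xs
  proof -
    have Kx: "joint_count xs ys = K" using xs by (auto simp: Fib_def)
    have pos: "T (xs!i) (ys!i) > 0" if i: "i < n" for i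
      using joint_count_pos[of i ys xs] joint_count_le_count[of xs ys "xs!i" "ys!i"] i n Kx
      by (simp add: T_def)
    have "(\<Prod>i<n. T (xs!i) (ys!i)) = exp (\<Sum>i<n. ln (T (xs!i) (ys!i)))"
      using pos by (simp add: exp_sum)
    also have "(\<Sum>i<n. ln (T (xs!i) (ys!i))) = (\<Sum>a\<in>UNIV. \<Sum>b\<in>UNIV. real (joint_count xs ys a b) * ln (T a b))"
      using sum_by_joint_type[of "\<lambda>a b. ln (T a b)" xs ys] n by simp
    also have "\<dots> = - real n * emp_cond_entropy x0 ys"
      using emp_cond_entropy_alt[of ys x0] n unfolding Kx T_def K_def by simp
    finally show ?thesis .
  qed
  have "real (card Fib) * exp (- real n * emp_cond_entropy x0 ys) = (\<Sum>xs\<in>Fib. \<Prod>i<n. T (xs!i) (ys!i))"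
    using val by simp
  also have "\<dots> \<le> (\<Sum>xs\<in>{xs. length xs = n}. \<Prod>i<n. T (xs!i) (ys!i))"
    by (intro sum_mono2 finite_words) (auto simp: Fib_def T0 prod_nonneg)
  also have "\<dots> = 1" by (rule total)
  finally have "real (card Fib) * exp (- real n * emp_cond_entropy x0 ys) \<le> 1" .
  then have "real (card Fib) \<le> exp (real n * emp_cond_entropy x0 ys)"
    by (simp add: exp_minus field_simps)
  then show ?thesis unfolding Fib_def K_def .
qed

text \<open>Summing over the at most \<open>(n+1)\<^bsup>|A||B|\<^esup>\<close> joint types: the words x with
  \<open>H(x|y) \<le> h\<close> number at most \<open>(n+1)\<^bsup>|A||B|\<^esup> exp (n h)\<close>.\<close>

lemma card_low_cond_entropy:
  fixes ys :: "'b::finite list"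
  assumes n: "length ys = n" "n > 0"
  shows "real (card {xs::'a::finite list. length xs = n \<and> emp_cond_entropy xs ys \<le> h})
    \<le> real (Suc n) ^ (CARD('a) * CARD('b)) * exp (real n * h)"
proof -
  define S where "S = {xs::'a list. length xs = n \<and> emp_cond_entropy xs ys \<le> h}"
  define J where "J xs = joint_count xs ys" for xs :: "'a list"
  define Ks where "Ks = {K::'a \<Rightarrow> 'b \<Rightarrow> nat. \<forall>a b. K a b \<le> n}"
  have finS: "finite S" using finite_words[of n] by (rule rev_finite_subset) (auto simp: S_def)
  have Ks: "Ks = Pi\<^sub>E UNIV (\<lambda>_. Pi\<^sub>E UNIV (\<lambda>_. {..n}))" by (auto simp: Ks_def PiE_UNIV_domain)
  have cardKs: "card Ks = Suc n ^ (CARD('a) * CARD('b))"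
    unfolding Ks by (simp add: card_PiE flip: power_mult) (simp add: ac_simps)
  have "joint_count xs ys a b \<le> n" for xs :: "'a list" and a b
    using joint_count_le_count[of xs ys a b] count_le_length[of ys b] n by simp
  then have JS: "J ` S \<subseteq> Ks" by (auto simp: J_def Ks_def)
  have fiber: "real (card {xs\<in>S. J xs = K}) \<le> exp (real n * h)" if K: "K \<in> J ` S" for K
  proof -
    obtain x0 where x0: "x0 \<in> S" "J x0 = K" using K by auto
    let ?F = "{xs::'a list. length xs = n \<and> (\<forall>a b. joint_count xs ys a b = joint_count x0 ys a b)}"
    have "{xs\<in>S. J xs = K} \<subseteq> ?F" using x0 by (auto simp: S_def J_def)
    moreover have "finite ?F" using finite_words[of n] by (rule rev_finite_subset) auto
    ultimately have "real (card {xs\<in>S. J xs = K}) \<le> real (card ?F)"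
      by (simp add: card_mono)
    also have "\<dots> \<le> exp (real n * emp_cond_entropy x0 ys)"
      using joint_type_class_card[OF n] x0 by (auto simp: S_def)
    also have "\<dots> \<le> exp (real n * h)"
      using x0 by (auto simp: S_def intro!: mult_left_mono)
    finally show ?thesis .
  qed
  have "card (\<Union>K\<in>J ` S. {xs\<in>S. J xs = K}) \<le> (\<Sum>K\<in>J ` S. card {xs\<in>S. J xs = K})"
    by (rule card_UN_le) (rule finite_imageI[OF finS])
  moreover have "(\<Union>K\<in>J ` S. {xs\<in>S. J xs = K}) = S" by auto
  ultimately have "card S \<le> (\<Sum>K\<in>J ` S. card {xs\<in>S. J xs = K})" by simp
  then have "real (card S) \<le> (\<Sum>K\<in>J ` S. real (card {xs\<in>S. J xs = K}))"
    by (simp add: of_nat_sum[symmetric] del: of_nat_sum)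
  also have "\<dots> \<le> real (card (J ` S)) * exp (real n * h)"
    using sum_mono[OF fiber] by simp
  also have "\<dots> \<le> real (card Ks) * exp (real n * h)"
    using card_mono[OF _ JS] Ks by (intro mult_right_mono) (auto simp: finite_PiE)
  finally show ?thesis unfolding S_def cardKs by simp
qed


subsection \<open>Continuity of the conditional entropy\<close>

definition joint_dist :: "('a::finite \<Rightarrow> 'b::finite \<Rightarrow> real) \<Rightarrow> bool" where
  "joint_dist q \<longleftrightarrow> (\<forall>a b. 0 \<le> q a b) \<and> (\<Sum>a\<in>UNIV. \<Sum>b\<in>UNIV. q a b) = 1"

lemma joint_dist_marginal_le:
  assumes "joint_dist q" shows "(\<Sum>a\<in>UNIV. q a b) \<le> 1"
proof -
  have "(\<Sum>a\<in>UNIV. q a b) \<le> (\<Sum>a\<in>UNIV. \<Sum>b'\<in>UNIV. q a b')"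
    using assms by (intro sum_mono member_le_sum) (auto simp: joint_dist_def)
  then show ?thesis using assms by (simp add: joint_dist_def)
qed

lemma joint_dist_le_one: "joint_dist q \<Longrightarrow> q a b \<le> 1"
  using joint_dist_marginal_le[of q b] member_le_sum[of a UNIV "\<lambda>a. q a b"]
  by (fastforce simp: joint_dist_def)

lemma joint_dist_input_channel:
  assumes "is_pd P" and "stochastic V" shows "joint_dist (\<lambda>a b. P a * V a b)"
  using assms by (simp add: joint_dist_def is_pd_def stochastic_def flip: sum_distrib_left)

lemma joint_cond_entropy_alt:
  fixes q :: "'a::finite \<Rightarrow> 'b::finite \<Rightarrow> real"
  assumes q0: "\<And>a b. q a b \<ge> 0"
  shows "joint_cond_entropy q = - (\<Sum>a\<in>UNIV. \<Sum>b\<in>UNIV. q a b * ln (q a b))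
    + (\<Sum>b\<in>UNIV. (\<Sum>a\<in>UNIV. q a b) * ln (\<Sum>a\<in>UNIV. q a b))"
proof -
  have col: "(\<Sum>a\<in>UNIV. if q a b = 0 then 0 else q a b * ln (q a b / (\<Sum>a'\<in>UNIV. q a' b)))
     = (\<Sum>a\<in>UNIV. q a b * ln (q a b)) - (\<Sum>a\<in>UNIV. q a b) * ln (\<Sum>a\<in>UNIV. q a b)" for b
  proof -
    let ?r = "\<Sum>a'\<in>UNIV. q a' b"
    have "(if q a b = 0 then 0 else q a b * ln (q a b / ?r)) = q a b * ln (q a b) - q a b * ln ?r" for a
    proof (cases "q a b = 0")
      case False
      then have qp: "q a b > 0" using q0[of a b] by simp
      moreover have "q a b \<le> ?r" using member_le_sum[of a UNIV "\<lambda>a. q a b"] q0 by simp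
      ultimately show ?thesis using False by (simp add: ln_div algebra_simps)
    qed simp
    then show ?thesis by (simp add: sum_subtractf sum_distrib_right)
  qed
  show ?thesis unfolding joint_cond_entropy_def
    by (subst (1 2) sum.swap) (simp add: col sum_subtractf)
qed

lemma xlnx_uniformly_continuous: "uniformly_continuous_on {0..1::real} (\<lambda>x. x * ln x)"
proof (rule compact_uniformly_continuous)
  show "continuous_on {0..1::real} (\<lambda>x. x * ln x)"
  proof (subst continuous_on_eq_continuous_within, intro ballI)
    fix x :: real assume x: "x \<in> {0..1}"
    show "continuous (at x within {0..1}) (\<lambda>x. x * ln x)"
    proof (cases "x = 0")
      case True
      have "((\<lambda>x::real. x * ln x) \<longlongrightarrow> 0) (at_right 0)" by real_asymp
      then show ?thesis using True by (simp add: continuous_within at_within_Icc_at_right)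
    next
      case False
      then have "isCont (\<lambda>x. x * ln x) x" by (intro continuous_intros) auto
      then show ?thesis by (rule continuous_at_imp_continuous_within)
    qed
  qed
qed simp

lemma joint_cond_entropy_diff_le:
  fixes q q0 :: "'a::finite \<Rightarrow> 'b::finite \<Rightarrow> real"
  assumes nn: "\<And>a b. q a b \<ge> 0" "\<And>a b. q0 a b \<ge> 0"
    and entries: "\<And>a b. \<bar>q a b * ln (q a b) - q0 a b * ln (q0 a b)\<bar> < e"
    and marginals: "\<And>b. \<bar>(\<Sum>a\<in>UNIV. q a b) * ln (\<Sum>a\<in>UNIV. q a b)
        - (\<Sum>a\<in>UNIV. q0 a b) * ln (\<Sum>a\<in>UNIV. q0 a b)\<bar> < e"
  shows "joint_cond_entropy q \<le> joint_cond_entropy q0 + (real CARD('a) * real CARD('b) + real CARD('b)) * e"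
proof -
  have "joint_cond_entropy q - joint_cond_entropy q0
      = (\<Sum>a\<in>UNIV. \<Sum>b\<in>UNIV. q0 a b * ln (q0 a b) - q a b * ln (q a b))
      + (\<Sum>b\<in>UNIV. (\<Sum>a\<in>UNIV. q a b) * ln (\<Sum>a\<in>UNIV. q a b)
                  - (\<Sum>a\<in>UNIV. q0 a b) * ln (\<Sum>a\<in>UNIV. q0 a b))"
    unfolding joint_cond_entropy_alt[of q, OF nn(1)] joint_cond_entropy_alt[of q0, OF nn(2)]
    by (simp add: sum_subtractf)
  also have "\<dots> \<le> (\<Sum>a\<in>(UNIV::'a set). \<Sum>b\<in>(UNIV::'b set). e) + (\<Sum>b\<in>(UNIV::'b set). e)"
    using entries marginals by (intro add_mono sum_mono) (smt (verit))+
  also have "\<dots> = (real CARD('a) * real CARD('b) + real CARD('b)) * e" by (simp add: algebra_simps)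
  finally show ?thesis by simp
qed

text \<open>\<open>H(X|Y)\<close> is uniformly continuous on joint distributions with respect to the entry-wise
  distance (one-sided form, as needed for the decoder).\<close>

lemma joint_cond_entropy_cont:
  assumes xi: "xi > 0"
  shows "\<exists>eps>0. \<forall>q q0 :: 'a::finite \<Rightarrow> 'b::finite \<Rightarrow> real.
     joint_dist q \<and> joint_dist q0 \<and> (\<forall>a b. \<bar>q a b - q0 a b\<bar> < eps)
       \<longrightarrow> joint_cond_entropy q \<le> joint_cond_entropy q0 + xi"
proof -
  define NA where "NA = real CARD('a)"
  define NB where "NB = real CARD('b)"
  have NA: "NA \<ge> 1" "NB \<ge> 1" unfolding NA_def NB_def by (simp_all add: Suc_le_eq)
  define e where "e = xi / (NA * NB + NB)"
  have "NA * NB + NB > 0" using NA by (simp add: add_pos_pos)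
  then have e: "e > 0" and xi_e: "(NA * NB + NB) * e = xi"
    using xi unfolding e_def by simp_all
  obtain d where d: "d > 0" and
    ucont: "\<forall>x\<in>{0..1::real}. \<forall>y\<in>{0..1}. \<bar>x - y\<bar> < d \<longrightarrow> \<bar>x * ln x - y * ln y\<bar> < e"
    using xlnx_uniformly_continuous e unfolding uniformly_continuous_on_def dist_real_def
    by metis
  define eps where "eps = d / NA"
  have eps: "eps > 0" using d NA by (simp add: eps_def)
  have epsd: "eps \<le> d" using d NA unfolding eps_def by (simp add: divide_le_eq mult_le_cancel_left1)
  show ?thesis
  proof (intro exI[of _ eps] conjI eps allI impI)
    fix q q0 :: "'a \<Rightarrow> 'b \<Rightarrow> real"
    assume h: "joint_dist q \<and> joint_dist q0 \<and> (\<forall>a b. \<bar>q a b - q0 a b\<bar> < eps)"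
    have nn: "\<And>a b. q a b \<ge> 0" "\<And>a b. q0 a b \<ge> 0" using h by (auto simp: joint_dist_def)
    have entries: "\<bar>q a b * ln (q a b) - q0 a b * ln (q0 a b)\<bar> < e" for a b
    proof -
      have "\<bar>q a b - q0 a b\<bar> < d" using h epsd by (meson less_le_trans)
      moreover have "q a b \<in> {0..1}" "q0 a b \<in> {0..1}" using nn h joint_dist_le_one by auto
      ultimately show ?thesis using ucont by blast
    qed
    have marginals: "\<bar>(\<Sum>a\<in>UNIV. q a b) * ln (\<Sum>a\<in>UNIV. q a b)
        - (\<Sum>a\<in>UNIV. q0 a b) * ln (\<Sum>a\<in>UNIV. q0 a b)\<bar> < e" for b
    proof -
      have "\<bar>(\<Sum>a\<in>UNIV. q a b) - (\<Sum>a\<in>UNIV. q0 a b)\<bar> \<le> (\<Sum>a\<in>UNIV. \<bar>q a b - q0 a b\<bar>)"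
        by (simp add: sum_subtractf[symmetric] sum_abs)
      also have "\<dots> < (\<Sum>a\<in>(UNIV::'a set). eps)"
        using h by (intro sum_strict_mono) auto
      also have "\<dots> = d" using NA by (simp add: eps_def NA_def)
      finally have "\<bar>(\<Sum>a\<in>UNIV. q a b) - (\<Sum>a\<in>UNIV. q0 a b)\<bar> < d" .
      moreover have "(\<Sum>a\<in>UNIV. q a b) \<in> {0..1}" "(\<Sum>a\<in>UNIV. q0 a b) \<in> {0..1}"
        using h nn joint_dist_marginal_le by (auto intro: sum_nonneg)
      ultimately show ?thesis using ucont by blast
    qed
    show "joint_cond_entropy q \<le> joint_cond_entropy q0 + xi"
      using joint_cond_entropy_diff_le[of q q0 e, OF nn entries marginals] xi_e by (simp add: NA_def NB_def)
  qed
qed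

text \<open>\<open>H(X|Y) \<le> |A| |B|\<close> for a joint distribution (each term is at most 1).\<close>

lemma joint_cond_entropy_le:
  fixes q :: "'a::finite \<Rightarrow> 'b::finite \<Rightarrow> real"
  assumes q: "joint_dist q"
  shows "joint_cond_entropy q \<le> real CARD('a) * real CARD('b)"
proof -
  have summand: "- (if q a b = 0 then 0 else q a b * ln (q a b / (\<Sum>a'\<in>UNIV. q a' b))) \<le> 1" for a b
  proof (cases "q a b = 0")
    case False
    let ?r = "\<Sum>a'\<in>UNIV. q a' b"
    have qp: "q a b > 0" using False q by (simp add: joint_dist_def order_le_neq_trans)
    have "q a b \<le> ?r" using member_le_sum[of a UNIV "\<lambda>a. q a b"] q by (simp add: joint_dist_def)
    then have rp: "?r > 0" using qp by simp
    have "- (q a b * ln (q a b / ?r)) = q a b * ln (?r / q a b)"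
      using qp rp by (simp add: ln_div algebra_simps)
    also have "\<dots> \<le> q a b * (?r / q a b - 1)"
      using qp rp by (intro mult_left_mono ln_le_minus_one) auto
    also have "\<dots> = ?r - q a b" using qp by (simp add: field_simps)
    also have "\<dots> \<le> 1" using joint_dist_marginal_le[OF q, of b] qp by simp
    finally show ?thesis using False by simp
  qed simp
  have "joint_cond_entropy q
      = (\<Sum>a\<in>UNIV. \<Sum>b\<in>UNIV. - (if q a b = 0 then 0 else q a b * ln (q a b / (\<Sum>a'\<in>UNIV. q a' b))))"
    unfolding joint_cond_entropy_def by (simp add: sum_negf)
  also have "\<dots> \<le> (\<Sum>a\<in>(UNIV::'a set). \<Sum>b\<in>(UNIV::'b set). 1)"
    by (intro sum_mono summand)
  finally show ?thesis by simp
qed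


subsection \<open>Output probabilities and the average channel\<close>

lemma out_prob_mono:
  assumes W0: "\<And>s a b. W s a b \<ge> 0"
    and imp: "\<And>ys. length ys = length xs \<Longrightarrow> A ys \<Longrightarrow> B ys"
  shows "out_prob W xs ss A \<le> out_prob W xs ss B"
  unfolding out_prob_def
  by (intro sum_mono) (auto simp: imp W0 prod_nonneg)

lemma out_prob_union:
  assumes W0: "\<And>s a b. W s a b \<ge> 0" and fin: "finite F"
  shows "out_prob W xs ss (\<lambda>ys. \<exists>i\<in>F. A i ys) \<le> (\<Sum>i\<in>F. out_prob W xs ss (A i))"
  using fin
proof (induction F rule: finite_induct)
  case empty then show ?case by (simp add: out_prob_def)
next
  case (insert j F)
  have "out_prob W xs ss (\<lambda>ys. \<exists>i\<in>insert j F. A i ys)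
     \<le> out_prob W xs ss (A j) + out_prob W xs ss (\<lambda>ys. \<exists>i\<in>F. A i ys)"
    unfolding out_prob_def sum.distrib[symmetric]
    by (intro sum_mono) (auto simp: W0 prod_nonneg)
  then show ?case using insert by simp
qed

text \<open>\<open>N(a|x) V(b|a)\<close> is the expected number of positions with input a and output b.\<close>

lemma count_times_avg_channel:
  "real (count_list xs a) * avg_channel W xs ss a b = (\<Sum>i<length xs. if xs!i = a then W (ss!i) a b else 0)"
proof (cases "count_list xs a = 0")
  case True
  then have "xs!i \<noteq> a" if "i < length xs" for i
    using that by (auto simp: count_list_0_iff)
  then show ?thesis using True by simp
next
  case False then show ?thesis by (simp add: avg_channel_def)
qed

definition chunk_deviation ::
  "('s \<Rightarrow> 'a \<Rightarrow> 'b \<Rightarrow> real) \<Rightarrow> 'a list \<Rightarrow> 's list \<Rightarrow> 'b list \<Rightarrow> 'a \<Rightarrow> 'b \<Rightarrow> real" where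
  "chunk_deviation W x s y a b = real (joint_count x y a b) - real (count_list x a) * avg_channel W x s a b"

lemma chunk_joint_count:
  assumes m: "m < M" and lx: "length xs = M * c" and ly: "length ys = M * c"
  shows "(\<Sum>t<M*c. if t \<in> {m*c..<m*c+c} then (if xs!t = a \<and> ys!t = b then 1 else 0) else 0)
    = real (joint_count (chunk c m xs) (chunk c m ys) a b)"
  unfolding sum_over_chunk[OF m] joint_count_sum chunk_length[OF m ly]
  by (intro sum.cong refl) (simp add: chunk_nth[OF m lx] chunk_nth[OF m ly])

lemma chunk_expected_count:
  assumes m: "m < M" and lx: "length xs = M * c" and ls: "length ss = M * c"
  shows "(\<Sum>t<M*c. if t \<in> {m*c..<m*c+c} then (if xs!t = a then W (ss!t) a b else 0) else 0)
    = real (count_list (chunk c m xs) a) * avg_channel W (chunk c m xs) (chunk c m ss) a b"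
  unfolding sum_over_chunk[OF m] count_times_avg_channel chunk_length[OF m lx]
  by (intro sum.cong refl) (simp add: chunk_nth[OF m lx] chunk_nth[OF m ls])

text \<open>The deviation in chunk m is a centred sum of independent letter statistics supported
  on the positions of that chunk, so the Chernoff bound applies with \<open>\<lambda> = \<epsilon>/8\<close>.\<close>

lemma chunk_deviation_signed_tail:
  fixes W :: "'s::finite \<Rightarrow> 'a::finite \<Rightarrow> 'b::finite \<Rightarrow> real"
  assumes W: "is_AVC W" and lx: "length xs = M * c" and ls: "length ss = M * c" and m: "m < M"
    and e: "0 < eps" "eps \<le> 1" and sg: "sg = 1 \<or> sg = -1"
  shows "out_prob W xs ss (\<lambda>ys. real c * eps \<le> sg * chunk_deviation W (chunk c m xs) (chunk c m ss) (chunk c m ys) a b)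
    \<le> exp (- (real c * eps^2 / 16))"
proof -
  define I where "I = {m*c..<m*c+c}"
  define p where "p t y = W (ss!t) (xs!t) y" for t y
  define g where "g t y = sg * (if t \<in> I \<and> xs!t = a \<and> y = b then 1 else 0)" for t y
  define lam where "lam = eps / 8"
  have p0: "p t y \<ge> 0" for t y using W by (simp add: p_def is_AVC_def stochastic_def)
  have p1: "(\<Sum>y\<in>UNIV. p t y) = 1" for t using W by (simp add: p_def is_AVC_def stochastic_def)
  have g1: "\<bar>g t y\<bar> \<le> 1" for t y using sg by (auto simp: g_def)
  have gI: "t \<notin> I \<Longrightarrow> g t y = 0" for t y by (simp add: g_def)
  have mean: "(\<Sum>y\<in>UNIV. p t y * g t y) = sg * (if t \<in> I then (if xs!t = a then W (ss!t) a b else 0) else 0)"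
    for t by (cases "t \<in> I \<and> xs!t = a") (auto simp: g_def p_def if_distrib cong: if_cong)
  have centred: "(\<Sum>t<M*c. g t (ys!t) - (\<Sum>y\<in>UNIV. p t y * g t y))
      = sg * chunk_deviation W (chunk c m xs) (chunk c m ss) (chunk c m ys) a b"
    if ly: "length ys = M * c" for ys
  proof -
    have "(\<Sum>t<M*c. g t (ys!t)) = sg * (\<Sum>t<M*c. if t \<in> I then (if xs!t = a \<and> ys!t = b then 1 else 0) else 0)"
      by (simp add: g_def sum_distrib_left if_distrib cong: if_cong) (intro sum.cong refl, auto)
    then show ?thesis
      unfolding sum_subtractf mean sum_distrib_left[symmetric] I_def chunk_deviation_def
        chunk_joint_count[OF m lx ly] chunk_expected_count[OF m lx ls]
      by (simp add: algebra_simps)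
  qed
  have "out_prob W xs ss (\<lambda>ys. real c * eps \<le> sg * chunk_deviation W (chunk c m xs) (chunk c m ss) (chunk c m ys) a b)
    = (\<Sum>ys\<in>{ys. length ys = M*c}.
      if (\<Sum>t<M*c. g t (ys!t) - (\<Sum>y\<in>UNIV. p t y * g t y)) \<ge> real c * eps then \<Prod>t<M*c. p t (ys!t) else 0)"
    unfolding out_prob_def lx by (intro sum.cong refl) (use centred in \<open>simp add: p_def\<close>)
  also have "\<dots> \<le> exp (4 * lam^2 * card (I \<inter> {..<M*c}) - lam * (real c * eps))"
    by (rule chernoff_bound[OF p0 p1 g1 gI]) (use e in \<open>auto simp: lam_def\<close>)
  also have "\<dots> \<le> exp (4 * lam^2 * real c - lam * (real c * eps))"
  proof -
    have "card (I \<inter> {..<M*c}) \<le> card I" by (intro card_mono) (auto simp: I_def)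
    then show ?thesis by (simp add: I_def mult_left_mono)
  qed
  also have "4 * lam^2 * real c - lam * (real c * eps) = - (real c * eps^2 / 16)"
    by (simp add: lam_def power2_eq_square field_simps)
  finally show ?thesis .
qed

lemma chunk_deviation_tail:
  fixes W :: "'s::finite \<Rightarrow> 'a::finite \<Rightarrow> 'b::finite \<Rightarrow> real"
  assumes W: "is_AVC W" and lx: "length xs = M * c" and ls: "length ss = M * c" and m: "m < M"
    and e: "0 < eps" "eps \<le> 1"
  shows "out_prob W xs ss (\<lambda>ys. real c * eps \<le> \<bar>chunk_deviation W (chunk c m xs) (chunk c m ss) (chunk c m ys) a b\<bar>)
    \<le> 2 * exp (- (real c * eps^2 / 16))"
proof -
  have W0: "\<And>s a b. W s a b \<ge> 0" using W by (simp add: is_AVC_def stochastic_def)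
  let ?dev = "\<lambda>ys. chunk_deviation W (chunk c m xs) (chunk c m ss) (chunk c m ys) a b"
  have "out_prob W xs ss (\<lambda>ys. real c * eps \<le> \<bar>?dev ys\<bar>)
      \<le> out_prob W xs ss (\<lambda>ys. \<exists>sg\<in>{1, -1}. real c * eps \<le> sg * ?dev ys)"
    by (rule out_prob_mono[OF W0]) (auto simp: abs_if split: if_splits)
  also have "\<dots> \<le> (\<Sum>sg\<in>{1::real, -1}. out_prob W xs ss (\<lambda>ys. real c * eps \<le> sg * ?dev ys))"
    by (rule out_prob_union[OF W0]) simp
  also have "\<dots> \<le> (\<Sum>sg\<in>{1::real, -1}. exp (- (real c * eps^2 / 16)))"
    by (intro sum_mono chunk_deviation_signed_tail[OF W lx ls m e]) auto
  finally show ?thesis by simp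
qed


subsection \<open>Decoding a single chunk\<close>

definition near_entropy ::
  "('a::finite \<Rightarrow> real) \<Rightarrow> ('a \<Rightarrow> 'b::finite \<Rightarrow> real) set \<Rightarrow> 'b list \<Rightarrow> real \<Rightarrow> real" where
  "near_entropy P S y \<delta> = Sup (cond_entropy P ` near_channels P S y \<delta>)"

definition chunk_list ::
  "('a::finite \<Rightarrow> real) \<Rightarrow> real \<Rightarrow> real \<Rightarrow> nat \<Rightarrow> ('a \<Rightarrow> 'b::finite \<Rightarrow> real) set \<Rightarrow> 'b list \<Rightarrow> 'a list set" where
  "chunk_list P \<delta> r c S y =
     {x \<in> typeclass_set P c. emp_cond_entropy x y \<le> near_entropy P S y \<delta> + r}"

lemma near_entropy_upper:
  assumes pd: "is_pd P" and st: "\<forall>V\<in>S. stochastic V" and V: "V \<in> near_channels P S y \<delta>"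
  shows "cond_entropy P V \<le> near_entropy P S y \<delta>"
proof -
  have "bdd_above (cond_entropy P ` near_channels P S y \<delta>)"
    using joint_cond_entropy_le[OF joint_dist_input_channel[OF pd]] st
    by (intro bdd_aboveI[where M = "real CARD('a) * real CARD('b)"])
      (auto simp: near_channels_def cond_entropy_joint)
  then show ?thesis unfolding near_entropy_def using V by (intro cSup_upper) auto
qed

lemma d_TV_marginals_lt:
  fixes q q0 :: "'a::finite \<Rightarrow> 'b::finite \<Rightarrow> real"
  assumes close: "\<forall>a b. \<bar>q a b - q0 a b\<bar> < eps"
  shows "d_TV (\<lambda>b. \<Sum>a\<in>UNIV. q a b) (\<lambda>b. \<Sum>a\<in>UNIV. q0 a b) < real CARD('a) * real CARD('b) * eps"
proof -
  have eps: "eps > 0" using close by (meson abs_ge_zero le_less_trans)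
  have "d_TV (\<lambda>b. \<Sum>a\<in>UNIV. q a b) (\<lambda>b. \<Sum>a\<in>UNIV. q0 a b) = (\<Sum>b\<in>UNIV. \<bar>\<Sum>a\<in>UNIV. q a b - q0 a b\<bar>) / 2"
    by (simp add: d_TV_def sum_subtractf)
  also have "\<dots> \<le> (\<Sum>b\<in>UNIV. \<Sum>a\<in>UNIV. \<bar>q a b - q0 a b\<bar>) / 2"
    by (intro divide_right_mono sum_mono sum_abs) auto
  also have "\<dots> < (\<Sum>b\<in>(UNIV::'b set). \<Sum>a\<in>(UNIV::'a set). eps) / 2"
    using close by (intro divide_strict_right_mono sum_strict_mono) auto
  also have "\<dots> < real CARD('a) * real CARD('b) * eps" using eps by simp
  finally show ?thesis .
qed

lemma small_deviation_chunk_listed: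
  fixes W :: "'s \<Rightarrow> 'a::finite \<Rightarrow> 'b::finite \<Rightarrow> real" and x :: "'a list" and y :: "'b list"
  assumes pd: "is_pd P" and c: "c > 0"
    and x: "x \<in> typeclass_set P c" and y: "length y = c"
    and VS: "avg_channel W x s \<in> S" and Sst: "\<forall>V\<in>S. stochastic V"
    and cont: "\<forall>q q0 :: 'a \<Rightarrow> 'b \<Rightarrow> real. joint_dist q \<and> joint_dist q0 \<and> (\<forall>a b. \<bar>q a b - q0 a b\<bar> < eps)
       \<longrightarrow> joint_cond_entropy q \<le> joint_cond_entropy q0 + r"
    and ed: "real CARD('a) * real CARD('b) * eps \<le> \<delta>"
    and dev: "\<forall>a b. \<bar>chunk_deviation W x s y a b\<bar> < real c * eps"
  shows "avg_channel W x s \<in> near_channels P S y \<delta> \<and> x \<in> chunk_list P \<delta> r c S y"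
proof -
  define V where "V = avg_channel W x s"
  define q where "q a b = real (joint_count x y a b) / real c" for a b
  define q0 where "q0 a b = P a * V a b" for a b
  have stV: "stochastic V" using VS Sst by (simp add: V_def)
  have cntx: "real (count_list x a) = real c * P a" for a
    using x by (simp add: typeclass_set_def)
  have close: "\<forall>a b. \<bar>q a b - q0 a b\<bar> < eps"
  proof (intro allI)
    fix a b
    have "q a b - q0 a b = chunk_deviation W x s y a b / real c"
      using c by (simp add: q_def q0_def V_def chunk_deviation_def cntx field_simps)
    then have "\<bar>q a b - q0 a b\<bar> = \<bar>chunk_deviation W x s y a b\<bar> / real c"
      by (simp add: abs_divide)
    then show "\<bar>q a b - q0 a b\<bar> < eps" using dev c by (simp add: divide_less_eq mult.commute)
  qed
  have jq: "joint_dist q"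
    using total_joint_count[of x y] y c
    by (simp add: joint_dist_def q_def flip: sum_divide_distrib)
  have jq0: "joint_dist q0" unfolding q0_def by (rule joint_dist_input_channel[OF pd stV])
  have "seq_type y = (\<lambda>b. \<Sum>a\<in>UNIV. q a b)"
    using y by (simp add: fun_eq_iff seq_type_def q_def sum_joint_count flip: sum_divide_distrib)
  moreover have "out_dist P V = (\<lambda>b. \<Sum>a\<in>UNIV. q0 a b)"
    by (simp add: fun_eq_iff out_dist_def q0_def)
  ultimately have "d_TV (seq_type y) (out_dist P V) = d_TV (\<lambda>b. \<Sum>a\<in>UNIV. q a b) (\<lambda>b. \<Sum>a\<in>UNIV. q0 a b)"
    by simp
  also have "\<dots> < \<delta>" using d_TV_marginals_lt[OF close] ed by linarith
  finally have near: "V \<in> near_channels P S y \<delta>" using VS by (simp add: near_channels_def V_def)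
  have "emp_cond_entropy x y = joint_cond_entropy q" unfolding emp_cond_entropy_def q_def using y by simp
  also have "\<dots> \<le> joint_cond_entropy q0 + r" using cont jq jq0 close by blast
  also have "joint_cond_entropy q0 = cond_entropy P V" unfolding cond_entropy_joint q0_def ..
  also have "cond_entropy P V \<le> near_entropy P S y \<delta>" by (rule near_entropy_upper[OF pd Sst near])
  finally show ?thesis using near x by (simp add: chunk_list_def V_def)
qed

lemma chunk_list_card:
  fixes y :: "'b::finite list" and S :: "('a::finite \<Rightarrow> 'b \<Rightarrow> real) set"
  assumes c: "c > 0" and y: "length y = c"
  shows "real (card (chunk_list P \<delta> r c S y))
    \<le> real (Suc c) ^ (CARD('a) * CARD('b)) * exp (real c * (near_entropy P S y \<delta> + r))"
proof -
  let ?L = "{x::'a list. length x = c \<and> emp_cond_entropy x y \<le> near_entropy P S y \<delta> + r}"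
  have "chunk_list P \<delta> r c S y \<subseteq> ?L" by (auto simp: chunk_list_def typeclass_set_def)
  moreover have "finite ?L" using finite_words[of c] by (rule rev_finite_subset) auto
  ultimately have "real (card (chunk_list P \<delta> r c S y)) \<le> real (card ?L)" by (simp add: card_mono)
  also have "\<dots> \<le> real (Suc c) ^ (CARD('a) * CARD('b)) * exp (real c * (near_entropy P S y \<delta> + r))"
    by (rule card_low_cond_entropy[OF y c])
  finally show ?thesis .
qed


subsection \<open>The list decoder\<close>

definition list_decoder ::
  "('a::finite \<Rightarrow> real) \<Rightarrow> real \<Rightarrow> real \<Rightarrow> nat \<Rightarrow> nat \<Rightarrow> 'b::finite list \<Rightarrow> ('a \<Rightarrow> 'b \<Rightarrow> real) set list \<Rightarrow> 'a list set" where
  "list_decoder P \<delta> r c M ys Vs =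
     (if \<forall>m<M. near_channels P (Vs ! m) (chunk c m ys) \<delta> \<noteq> {}
      then {xs. length xs = M * c \<and> (\<forall>m<M. chunk c m xs \<in> chunk_list P \<delta> r c (Vs ! m) (chunk c m ys))}
      else {})"

lemma list_decoder_subset: "list_decoder P \<delta> r c M ys Vs \<subseteq> concat_type_class P c M"
  by (auto simp: list_decoder_def chunk_list_def concat_type_class_def)

text \<open>List size: the product of the chunk list sizes; the polynomial factor is absorbed
  into the slack once \<open>(c+1)\<^bsup>|A||B|\<^esup> \<le> exp (c r)\<close>.\<close>

lemma list_decoder_card:
  fixes ys :: "'b::finite list" and Vs :: "('a::finite \<Rightarrow> 'b \<Rightarrow> real) set list"
  assumes c: "c > 0" and ly: "length ys = M * c"
    and poly: "real (Suc c) ^ (CARD('a) * CARD('b)) \<le> exp (real c * r)"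
    and ne: "\<forall>m<M. near_channels P (Vs ! m) (chunk c m ys) \<delta> \<noteq> {}"
  shows "real (card (list_decoder P \<delta> r c M ys Vs))
    \<le> exp (real c * ((\<Sum>m<M. near_entropy P (Vs ! m) (chunk c m ys) \<delta>) + real M * (2 * r)))"
proof -
  have "card (list_decoder P \<delta> r c M ys Vs) = (\<Prod>m<M. card (chunk_list P \<delta> r c (Vs ! m) (chunk c m ys)))"
    using ne card_chunks[of M "\<lambda>m. chunk_list P \<delta> r c (Vs ! m) (chunk c m ys)" c]
    by (simp add: list_decoder_def chunk_list_def typeclass_set_def subset_iff)
  then have "real (card (list_decoder P \<delta> r c M ys Vs))
      = (\<Prod>m<M. real (card (chunk_list P \<delta> r c (Vs ! m) (chunk c m ys))))" by simp
  also have "\<dots> \<le> (\<Prod>m<M. exp (real c * (near_entropy P (Vs ! m) (chunk c m ys) \<delta> + 2 * r)))"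
  proof (intro prod_mono conjI of_nat_0_le_iff)
    fix m assume m: "m \<in> {..<M}"
    have "real (card (chunk_list P \<delta> r c (Vs ! m) (chunk c m ys)))
        \<le> real (Suc c) ^ (CARD('a) * CARD('b)) * exp (real c * (near_entropy P (Vs ! m) (chunk c m ys) \<delta> + r))"
      using chunk_list_card[OF c chunk_length[OF _ ly]] m by simp
    also have "\<dots> \<le> exp (real c * r) * exp (real c * (near_entropy P (Vs ! m) (chunk c m ys) \<delta> + r))"
      using poly by (intro mult_right_mono) auto
    also have "\<dots> = exp (real c * (near_entropy P (Vs ! m) (chunk c m ys) \<delta> + 2 * r))"
      by (simp add: mult_exp_exp algebra_simps)
    finally show "real (card (chunk_list P \<delta> r c (Vs ! m) (chunk c m ys)))
      \<le> exp (real c * (near_entropy P (Vs ! m) (chunk c m ys) \<delta> + 2 * r))" .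
  qed
  also have "\<dots> = exp (\<Sum>m<M. real c * (near_entropy P (Vs ! m) (chunk c m ys) \<delta> + 2 * r))"
    by (simp add: exp_sum)
  also have "(\<Sum>m<M. real c * (near_entropy P (Vs ! m) (chunk c m ys) \<delta> + 2 * r))
      = real c * ((\<Sum>m<M. near_entropy P (Vs ! m) (chunk c m ys) \<delta>) + real M * (2 * r))"
    by (simp add: sum_distrib_left sum.distrib algebra_simps)
  finally show ?thesis .
qed

lemma decoding_failure_deviation:
  fixes W :: "'s \<Rightarrow> 'a::finite \<Rightarrow> 'b::finite \<Rightarrow> real"
  assumes pd: "is_pd P" and c: "c > 0"
    and xs: "xs \<in> concat_type_class P c M" and ly: "length ys = M * c"
    and Vst: "\<forall>m<M. \<forall>V\<in>Vs ! m. stochastic V"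
    and Vin: "\<forall>m<M. avg_channel W (chunk c m xs) (chunk c m ss) \<in> Vs ! m"
    and cont: "\<forall>q q0 :: 'a \<Rightarrow> 'b \<Rightarrow> real. joint_dist q \<and> joint_dist q0 \<and> (\<forall>a b. \<bar>q a b - q0 a b\<bar> < eps)
       \<longrightarrow> joint_cond_entropy q \<le> joint_cond_entropy q0 + r"
    and ed: "real CARD('a) * real CARD('b) * eps \<le> \<delta>"
    and fail: "xs \<notin> list_decoder P \<delta> r c M ys Vs"
  shows "\<exists>m<M. \<exists>a b. real c * eps \<le> \<bar>chunk_deviation W (chunk c m xs) (chunk c m ss) (chunk c m ys) a b\<bar>"
proof (rule ccontr)
  assume "\<not> ?thesis"
  then have small: "\<forall>a b. \<bar>chunk_deviation W (chunk c m xs) (chunk c m ss) (chunk c m ys) a b\<bar> < real c * eps"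
    if "m < M" for m using that by (simp add: not_le)
  have listed: "avg_channel W (chunk c m xs) (chunk c m ss) \<in> near_channels P (Vs ! m) (chunk c m ys) \<delta>
      \<and> chunk c m xs \<in> chunk_list P \<delta> r c (Vs ! m) (chunk c m ys)" if m: "m < M" for m
    using small_deviation_chunk_listed[OF pd c _ chunk_length[OF m ly] _ _ cont ed small[OF m]]
      xs Vst Vin m by (simp add: concat_type_class_def)
  then have "xs \<in> list_decoder P \<delta> r c M ys Vs"
    using xs by (auto simp: list_decoder_def concat_type_class_def)
  with fail show False by simp
qed

lemma list_decoder_error:
  fixes W :: "'s::finite \<Rightarrow> 'a::finite \<Rightarrow> 'b::finite \<Rightarrow> real"
  assumes W: "is_AVC W" and pd: "is_pd P" and c: "c > 0"
    and eps: "0 < eps" "eps \<le> 1" and ed: "real CARD('a) * real CARD('b) * eps \<le> \<delta>"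
    and cont: "\<forall>q q0 :: 'a \<Rightarrow> 'b \<Rightarrow> real. joint_dist q \<and> joint_dist q0 \<and> (\<forall>a b. \<bar>q a b - q0 a b\<bar> < eps)
       \<longrightarrow> joint_cond_entropy q \<le> joint_cond_entropy q0 + r"
    and xs: "xs \<in> concat_type_class P c M" and ls: "length ss = M * c"
    and Vst: "\<forall>m<M. \<forall>V\<in>Vs ! m. stochastic V"
    and Vin: "\<forall>m<M. avg_channel W (chunk c m xs) (chunk c m ss) \<in> Vs ! m"
  shows "out_prob W xs ss (\<lambda>ys. xs \<notin> list_decoder P \<delta> r c M ys Vs)
    \<le> real M * (2 * real CARD('a) * real CARD('b)) * exp (- (real c * eps^2 / 16))"
proof -
  have W0: "\<And>s a b. W s a b \<ge> 0" using W by (simp add: is_AVC_def stochastic_def)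
  have lx: "length xs = M * c" using xs by (simp add: concat_type_class_def)
  define F where "F = {..<M} \<times> (UNIV::'a set) \<times> (UNIV::'b set)"
  define large where "large = (\<lambda>(m, a, b) ys.
    real c * eps \<le> \<bar>chunk_deviation W (chunk c m xs) (chunk c m ss) (chunk c m ys) a b\<bar>)"
  have "out_prob W xs ss (\<lambda>ys. xs \<notin> list_decoder P \<delta> r c M ys Vs) \<le> out_prob W xs ss (\<lambda>ys. \<exists>i\<in>F. large i ys)"
    using decoding_failure_deviation[OF pd c xs _ Vst Vin cont ed] lx
    by (intro out_prob_mono[OF W0]) (fastforce simp: F_def large_def)
  also have "\<dots> \<le> (\<Sum>i\<in>F. out_prob W xs ss (large i))"
    by (rule out_prob_union[OF W0]) (simp add: F_def)
  also have "\<dots> \<le> (\<Sum>i\<in>F. 2 * exp (- (real c * eps^2 / 16)))"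
    using chunk_deviation_tail[OF W lx ls _ eps] by (intro sum_mono) (auto simp: F_def large_def)
  also have "\<dots> = real M * (2 * real CARD('a) * real CARD('b)) * exp (- (real c * eps^2 / 16))"
    by (simp add: F_def card_cartesian_product)
  finally show ?thesis .
qed


text \<open>Choice of the closeness parameter eps: small enough for the entropy test (continuity
  of \<open>H(X|Y)\<close> at precision \<open>\<xi>/2\<close>) and for the total variation test at threshold delta.\<close>

lemma closeness_parameter:
  assumes "\<delta> > 0" and "\<xi> > 0"
  shows "\<exists>eps. 0 < eps \<and> eps \<le> 1 \<and> real CARD('a) * real CARD('b) * eps \<le> \<delta>
    \<and> (\<forall>q q0 :: 'a::finite \<Rightarrow> 'b::finite \<Rightarrow> real. joint_dist q \<and> joint_dist q0
          \<and> (\<forall>a b. \<bar>q a b - q0 a b\<bar> < eps) \<longrightarrow> joint_cond_entropy q \<le> joint_cond_entropy q0 + \<xi>/2)"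
proof -
  let ?AB = "real CARD('a) * real CARD('b)"
  obtain eps1 where eps1: "eps1 > 0" and cont1: "\<forall>q q0 :: 'a \<Rightarrow> 'b \<Rightarrow> real.
      joint_dist q \<and> joint_dist q0 \<and> (\<forall>a b. \<bar>q a b - q0 a b\<bar> < eps1)
      \<longrightarrow> joint_cond_entropy q \<le> joint_cond_entropy q0 + \<xi>/2"
    using joint_cond_entropy_cont[of "\<xi>/2"] assms(2) by auto
  define eps where "eps = min (min eps1 (\<delta> / ?AB)) 1"
  have "eps \<le> \<delta> / ?AB" by (simp add: eps_def)
  then have "?AB * eps \<le> \<delta>" by (simp add: field_simps)
  moreover have "eps \<le> eps1" by (simp add: eps_def)
  then have "\<forall>q q0 :: 'a \<Rightarrow> 'b \<Rightarrow> real. joint_dist q \<and> joint_dist q0 \<and> (\<forall>a b. \<bar>q a b - q0 a b\<bar> < eps)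
      \<longrightarrow> joint_cond_entropy q \<le> joint_cond_entropy q0 + \<xi>/2"
    using cont1 by (meson less_le_trans)
  moreover have "0 < eps" "eps \<le> 1" using eps1 assms(1) by (auto simp: eps_def)
  ultimately show ?thesis by blast
qed

lemma list_code:
  fixes W :: "'s::finite \<Rightarrow> 'a::finite \<Rightarrow> 'b::finite \<Rightarrow> real"
    and Vc :: "('a \<Rightarrow> 'b \<Rightarrow> real) set set"
  assumes W: "is_AVC W" and pd: "is_pd P" and pos: "\<forall>a. P a > 0"
    and eps: "0 < eps" "eps \<le> 1" and ed: "real CARD('a) * real CARD('b) * eps \<le> \<delta>"
    and cont: "\<forall>q q0 :: 'a \<Rightarrow> 'b \<Rightarrow> real. joint_dist q \<and> joint_dist q0 \<and> (\<forall>a b. \<bar>q a b - q0 a b\<bar> < eps)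
       \<longrightarrow> joint_cond_entropy q \<le> joint_cond_entropy q0 + \<xi>/2"
    and E2: "E2 = eps^2 / 32"
    and c: "c \<ge> 1" and int: "\<forall>a. \<exists>k::nat. real c * P a = real k"
    and large: "real CARD('a) * (1 + ln (real c)) \<le> real c * \<xi>"
    and poly: "real (Suc c) ^ (CARD('a) * CARD('b)) \<le> exp (real c * (\<xi>/2))"
    and const: "2 * real CARD('a) * real CARD('b) \<le> exp (real c * E2)"
    and Vc: "\<forall>S\<in>Vc. \<forall>V\<in>S. stochastic V"
  shows "\<exists>Dec :: 'b list \<Rightarrow> ('a \<Rightarrow> 'b \<Rightarrow> real) set list \<Rightarrow> 'a list set.
        real (card (concat_type_class P c M)) \<ge> exp (real (M * c) * (entropy P - \<xi>))
      \<and> (\<forall>ys Vs. length ys = M * c \<and> length Vs = M \<and> set Vs \<subseteq> Vc \<longrightarrow>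
           Dec ys Vs \<subseteq> concat_type_class P c M
         \<and> ((\<forall>m<M. near_channels P (Vs ! m) (chunk c m ys) \<delta> \<noteq> {}) \<longrightarrow>
              real (card (Dec ys Vs)) \<le> exp (real c * ((\<Sum>m<M.
                  Sup (cond_entropy P ` near_channels P (Vs ! m) (chunk c m ys) \<delta>)) + real M * \<xi>)))
         \<and> ((\<exists>m<M. near_channels P (Vs ! m) (chunk c m ys) \<delta> = {}) \<longrightarrow> Dec ys Vs = {}))
      \<and> (\<forall>xs\<in>concat_type_class P c M. \<forall>ss :: 's list. \<forall>Vs.
           length ss = M * c \<and> length Vs = M \<and> set Vs \<subseteq> Vc
           \<and> (\<forall>m<M. avg_channel W (chunk c m xs) (chunk c m ss) \<in> Vs ! m) \<longrightarrow>
           out_prob W xs ss (\<lambda>ys. xs \<notin> Dec ys Vs) \<le> real M * exp (- real c * E2))"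
proof (intro exI[of _ "list_decoder P \<delta> (\<xi>/2) c M"] conjI allI impI ballI)
  show "exp (real (M * c) * (entropy P - \<xi>)) \<le> real (card (concat_type_class P c M))"
    by (rule concat_type_class_card[OF pd pos c int large])
next
  fix ys :: "'b list" and Vs :: "('a \<Rightarrow> 'b \<Rightarrow> real) set list"
  assume "length ys = M * c \<and> length Vs = M \<and> set Vs \<subseteq> Vc"
  then have ly: "length ys = M * c" by simp
  show "list_decoder P \<delta> (\<xi>/2) c M ys Vs \<subseteq> concat_type_class P c M"
    by (rule list_decoder_subset)
  show "real (card (list_decoder P \<delta> (\<xi>/2) c M ys Vs)) \<le> exp (real c * ((\<Sum>m<M.
      Sup (cond_entropy P ` near_channels P (Vs ! m) (chunk c m ys) \<delta>)) + real M * \<xi>))"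
    if "\<forall>m<M. near_channels P (Vs ! m) (chunk c m ys) \<delta> \<noteq> {}"
    using list_decoder_card[of c ys M "\<xi>/2", OF _ ly poly that] c by (simp add: near_entropy_def)
  show "list_decoder P \<delta> (\<xi>/2) c M ys Vs = {}"
    if "\<exists>m<M. near_channels P (Vs ! m) (chunk c m ys) \<delta> = {}"
    using that by (auto simp: list_decoder_def)
next
  fix xs :: "'a list" and ss :: "'s list" and Vs :: "('a \<Rightarrow> 'b \<Rightarrow> real) set list"
  assume xs: "xs \<in> concat_type_class P c M" and hs: "length ss = M * c \<and> length Vs = M \<and> set Vs \<subseteq> Vc
       \<and> (\<forall>m<M. avg_channel W (chunk c m xs) (chunk c m ss) \<in> Vs ! m)"
  then have Vst: "\<forall>m<M. \<forall>V\<in>Vs ! m. stochastic V" using Vc by (auto dest: nth_mem)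
  have "2 * real CARD('a) * real CARD('b) * exp (- (real c * eps^2 / 16))
      \<le> exp (real c * E2) * exp (- (real c * eps^2 / 16))"
    using const by (intro mult_right_mono) auto
  also have "\<dots> = exp (- real c * E2)" by (simp add: mult_exp_exp E2)
  finally have "real M * (2 * real CARD('a) * real CARD('b)) * exp (- (real c * eps^2 / 16))
      \<le> real M * exp (- real c * E2)" by (simp add: mult.assoc mult_left_mono)
  then show "out_prob W xs ss (\<lambda>ys. xs \<notin> list_decoder P \<delta> (\<xi>/2) c M ys Vs) \<le> real M * exp (- real c * E2)"
    using list_decoder_error[OF W pd _ eps ed cont xs _ Vst] hs c by fastforce
qed

theorem lemma5:
  fixes W :: "'s::finite \<Rightarrow> 'a::finite \<Rightarrow> 'b::finite \<Rightarrow> real"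
    and P :: "'a \<Rightarrow> real"
    and \<delta> \<xi> :: real
    and v :: nat
  assumes "is_AVC W"
    and "is_pd P"
    and "\<forall>a. P a > 0"
    and "\<delta> > 0" and "\<xi> > 0"
  shows "\<exists>E2 > 0. \<exists>c0. \<forall>c \<ge> c0. (\<forall>a. \<exists>k::nat. real c * P a = real k) \<longrightarrow>
    (\<forall>Vc :: ('a \<Rightarrow> 'b \<Rightarrow> real) set set.
       finite Vc \<and> card Vc \<le> c ^ v \<and> (\<forall>S\<in>Vc. \<forall>V\<in>S. stochastic V) \<longrightarrow>
     (\<forall>M::nat. \<exists>Dec :: 'b list \<Rightarrow> ('a \<Rightarrow> 'b \<Rightarrow> real) set list \<Rightarrow> 'a list set.
        real (card (concat_type_class P c M)) \<ge> exp (real (M * c) * (entropy P - \<xi>))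
      \<and> (\<forall>ys Vs. length ys = M * c \<and> length Vs = M \<and> set Vs \<subseteq> Vc \<longrightarrow>
           Dec ys Vs \<subseteq> concat_type_class P c M
         \<and> ((\<forall>m<M. near_channels P (Vs ! m) (chunk c m ys) \<delta> \<noteq> {}) \<longrightarrow>
              real (card (Dec ys Vs)) \<le> exp (real c * ((\<Sum>m<M.
                  Sup (cond_entropy P ` near_channels P (Vs ! m) (chunk c m ys) \<delta>)) + real M * \<xi>)))
         \<and> ((\<exists>m<M. near_channels P (Vs ! m) (chunk c m ys) \<delta> = {}) \<longrightarrow> Dec ys Vs = {}))
      \<and> (\<forall>xs\<in>concat_type_class P c M. \<forall>ss :: 's list. \<forall>Vs.
           length ss = M * c \<and> length Vs = M \<and> set Vs \<subseteq> Vc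
           \<and> (\<forall>m<M. avg_channel W (chunk c m xs) (chunk c m ss) \<in> Vs ! m) \<longrightarrow>
           out_prob W xs ss (\<lambda>ys. xs \<notin> Dec ys Vs) \<le> real M * exp (- real c * E2))))"
proof -
  note W = assms(1) and pd = assms(2) and pos = assms(3)
  obtain eps where eps: "0 < eps" "eps \<le> 1" and ed: "real CARD('a) * real CARD('b) * eps \<le> \<delta>"
    and cont: "\<forall>q q0 :: 'a \<Rightarrow> 'b \<Rightarrow> real. joint_dist q \<and> joint_dist q0 \<and> (\<forall>a b. \<bar>q a b - q0 a b\<bar> < eps)
      \<longrightarrow> joint_cond_entropy q \<le> joint_cond_entropy q0 + \<xi>/2"
    using closeness_parameter[OF assms(4,5)] by blast
  define E2 where "E2 = eps^2 / 32"
  have E2: "E2 > 0" using eps by (simp add: E2_def)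
  text \<open>For large c the polynomial factors are absorbed into the slack \<open>\<xi>\<close> and into \<open>E2\<close>.\<close>
  have "eventually (\<lambda>c. 1 \<le> c \<and> real CARD('a) * (1 + ln (real c)) \<le> real c * \<xi>
      \<and> real (Suc c) ^ (CARD('a) * CARD('b)) \<le> exp (real c * (\<xi>/2))
      \<and> 2 * real CARD('a) * real CARD('b) \<le> exp (real c * E2)) sequentially"
    using assms(5) E2 by (intro eventually_conj eventually_ge_at_top; real_asymp)+
  then obtain c0 where c0: "\<forall>c\<ge>c0. 1 \<le> c \<and> real CARD('a) * (1 + ln (real c)) \<le> real c * \<xi>
      \<and> real (Suc c) ^ (CARD('a) * CARD('b)) \<le> exp (real c * (\<xi>/2))
      \<and> 2 * real CARD('a) * real CARD('b) \<le> exp (real c * E2)"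
    unfolding eventually_sequentially by blast
  show ?thesis
    apply (intro exI[of _ E2] conjI[OF E2] exI[of _ c0] allI impI)
    subgoal for c Vc M
      using c0 by (intro list_code[OF W pd pos eps ed cont E2_def]) auto
    done
qed

end
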